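(* Consider the linear Boltzmann equation $\partial_tf+v\cdot\nabla_xf=Q(f,\mathcal{M})$ on $\mathbb{T}^d\times\mathbb{R}^d$ with $H(x,v):=|v|^2/2$, or $\partial_tf+v\cdot\nabla_xf-\nabla\Phi\cdot\nabla_vf=Q(f,\mathcal{M})$ on $\mathbb{R}^d\times\mathbb{R}^d$ with $\Phi\in\mathcal{C}^2$ bounded below and $H(x,v):=\Phi(x)+|v|^2/2$, with collision kernel $B(|v-v_*|,\sigma)=|v-v_*|^\gamma b(\cdot)$, $\gamma\ge0$, $b$ integrable. Let $E_0>0$, $E:=\{(x,v):H(x,v)\le E_0\}$, and let $f$ be the solution with initial datum $f_0=\delta_{(x_0,v_0)}$ where $H(x_0,v_0)\le E_0$. Then there is a constant $C_1>0$ (depending on $E_0$ but not on $(x_0,v_0)$) such that for all $t\ge0$ \[f(t,\cdot,\cdot)\ge e^{-tC_1}\int_0^t\int_0^sT_{t-s}\widetilde{\mathcal{L}}^+T_{s-r}\widetilde{\mathcal{L}}^+T_r(\mathbb{1}_Ef_0)\,\mathrm{d}r\,\mathrm{d}s,\qquad\widetilde{\mathcal{L}}^+g:=\mathbb{1}_E\mathcal{L}^+g,\] in the sense of measures.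
   Context: $\mathcal{M}(v)=(2\pi)^{-d/2}e^{-|v|^2/2}$. The linear Boltzmann operator splits as $Q(f,\mathcal{M})=\mathcal{L}^+f-\kappa(v)f$ with gain part $\mathcal{L}^+f(v)=\int_{\mathbb{R}^d}\int_{\mathbb{S}^{d-1}}B(|v-v_*|,\sigma)f(v')\mathcal{M}(v_*')\,\mathrm{d}\sigma\,\mathrm{d}v_*$ and collision frequency $\kappa(v)=\int\int B(|v-v_*|,\sigma)\mathcal{M}(v_* )\,\mathrm{d}\sigma\,\mathrm{d}v_*$, where $v'=\frac{v+v_*}{2}+\frac{|v-v_*|}{2}\sigma$, $v_*'=\frac{v+v_*}{2}-\frac{|v-v_*|}{2}\sigma$ (acting in $v$ for fixed $x$); $\kappa$ satisfies $0\le\kappa(v)\le C(1+|v|^2)^{\gamma/2}$. $(T_t)$ is the transport semigroup of $-v\cdot\nabla_x$ (resp. $-v\cdot\nabla_x+\nabla\Phi\cdot\nabla_v$), i.e. push-forward by the corresponding characteristic flow. *)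

theory Defs
  imports "HOL-Analysis.Analysis" "HOL-Probability.Probability"
begin

type_synonym ('d) state = "(real^'d) \<times> (real^'d)"

definition maxwellian :: "real^'d \<Rightarrow> real" where
  "maxwellian v = (2 * pi) powr (- real CARD('d) / 2) * exp (- (norm v)\<^sup>2 / 2)"

text \<open>Surface measure on the unit sphere (as a measure on the ambient space):
  d times the push-forward of Lebesgue measure on the unit ball under x to x/|x|.\<close>
definition sphere_measure :: "(real^'d) measure" where
  "sphere_measure = density (distr (density lborel (indicator (ball 0 1))) borel sgn)
                            (\<lambda>_. ennreal (real CARD('d)))"

definition post_vel :: "real^'d \<Rightarrow> real^'d \<Rightarrow> real^'d \<Rightarrow> real^'d" where
  "post_vel v vs \<sigma> = (1/2) *\<^sub>R (v + vs) + (norm (v - vs) / 2) *\<^sub>R \<sigma>"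

definition kernel :: "real \<Rightarrow> (real \<Rightarrow> real) \<Rightarrow> real^'d \<Rightarrow> real^'d \<Rightarrow> real^'d \<Rightarrow> real" where
  "kernel \<gamma> b v vs \<sigma> = norm (v - vs) powr \<gamma> * b (\<sigma> \<bullet> sgn (v - vs))"

definition coll_freq :: "real \<Rightarrow> (real \<Rightarrow> real) \<Rightarrow> real^'d \<Rightarrow> real" where
  "coll_freq \<gamma> b v = enn2real (\<integral>\<^sup>+ vs. \<integral>\<^sup>+ \<sigma>. ennreal (kernel \<gamma> b v vs \<sigma> * maxwellian vs)
        \<partial>sphere_measure \<partial>lborel)"

text \<open>Gain operator L+ acting on measures on (position x velocity), via its weak form
  int phi d(L+ mu) = int int int B(|w-w*|,sigma) M(w*) phi(x,w') dsigma dw* dmu(x,w).\<close>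
definition gain :: "real \<Rightarrow> (real \<Rightarrow> real) \<Rightarrow> ('d::finite) state measure \<Rightarrow> ('d::finite) state measure" where
  "gain \<gamma> b \<mu> = measure_of UNIV (sets borel)
     (\<lambda>A. \<integral>\<^sup>+ z. \<integral>\<^sup>+ vs. \<integral>\<^sup>+ \<sigma>. ennreal (kernel \<gamma> b (snd z) vs \<sigma> * maxwellian vs)
              * indicator A (fst z, post_vel (snd z) vs \<sigma>) \<partial>sphere_measure \<partial>lborel \<partial>\<mu>)"

definition transport :: "(real \<Rightarrow> ('d::finite) state \<Rightarrow> ('d::finite) state) \<Rightarrow> real \<Rightarrow> ('d::finite) state measure \<Rightarrow> ('d::finite) state measure" where
  "transport Fl t \<mu> = distr \<mu> borel (Fl t)"

text \<open>Damped transport semigroup generated by the transport operator minus kappa.\<close>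
definition damped :: "(real \<Rightarrow> ('d::finite) state \<Rightarrow> ('d::finite) state) \<Rightarrow> (real^'d \<Rightarrow> real) \<Rightarrow> real \<Rightarrow> ('d::finite) state measure \<Rightarrow> ('d::finite) state measure" where
  "damped Fl \<kappa> t \<mu> = distr (density \<mu> (\<lambda>z. ennreal (exp (- enn2real
       (\<integral>\<^sup>+ \<tau>. ennreal (\<kappa> (snd (Fl \<tau> z))) * indicator {0..t} \<tau> \<partial>lborel))))) borel (Fl t)"

definition restr :: "('d::finite) state set \<Rightarrow> ('d::finite) state measure \<Rightarrow> ('d::finite) state measure" where
  "restr E \<mu> = density \<mu> (indicator E)"

text \<open>(Nonnegative, measure-valued) mild solution of the linear Boltzmann equation
  d_t f + (transport) f = L+ f - kappa f with initial datum mu0 (Duhamel formula).\<close>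
definition mild_solution :: "(real \<Rightarrow> ('d::finite) state \<Rightarrow> ('d::finite) state) \<Rightarrow> real \<Rightarrow> (real \<Rightarrow> real)
     \<Rightarrow> ('d::finite) state measure \<Rightarrow> (real \<Rightarrow> ('d::finite) state measure) \<Rightarrow> bool" where
  "mild_solution Fl \<gamma> b \<mu>0 f \<longleftrightarrow> (\<forall>t\<ge>0. sets (f t) = sets borel \<and>
     (\<forall>A\<in>sets borel. emeasure (f t) A =
        emeasure (damped Fl (coll_freq \<gamma> b) t \<mu>0) A
        + (\<integral>\<^sup>+ s. emeasure (damped Fl (coll_freq \<gamma> b) (t - s) (gain \<gamma> b (f s))) A
               * indicator {0..t} s \<partial>lborel)))"

text \<open>Torus T^d = R^d / Z^d represented by the fundamental domain [0,1)^d.\<close>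
definition torus_box :: "(real^'d) set" where
  "torus_box = {x. \<forall>i. 0 \<le> x $ i \<and> x $ i < 1}"

definition torus_flow :: "real \<Rightarrow> ('d::finite) state \<Rightarrow> ('d::finite) state" where
  "torus_flow t z = ((\<chi> i. frac (fst z $ i + t * snd z $ i)), snd z)"

text \<open>The two settings: free transport on the torus, or Hamiltonian flow with a C^2 potential
  bounded below on R^d.  S is the phase space, Fl the characteristic flow, H the Hamiltonian.\<close>
definition kinetic_setting :: "('d::finite) state set \<Rightarrow> (real \<Rightarrow> ('d::finite) state \<Rightarrow> ('d::finite) state) \<Rightarrow> (('d::finite) state \<Rightarrow> real) \<Rightarrow> bool" where
  "kinetic_setting S Fl H \<longleftrightarrow>
     (S = torus_box \<times> UNIV \<and> Fl = torus_flow \<and> H = (\<lambda>z. (norm (snd z))\<^sup>2 / 2)) \<or>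
     (S = UNIV \<and>
      (\<exists>(\<Phi> :: real^'d \<Rightarrow> real) grad D2.
         (\<forall>x. (\<Phi> has_derivative (\<lambda>h. grad x \<bullet> h)) (at x)) \<and>
         (\<forall>x. (grad has_derivative blinfun_apply (D2 x)) (at x)) \<and>
         continuous_on UNIV D2 \<and>
         (\<exists>m. \<forall>x. m \<le> \<Phi> x) \<and>
         H = (\<lambda>z. \<Phi> (fst z) + (norm (snd z))\<^sup>2 / 2) \<and>
         (\<forall>z. Fl 0 z = z) \<and>
         (\<forall>z t. ((\<lambda>\<tau>. Fl \<tau> z) has_vector_derivative (snd (Fl t z), - grad (fst (Fl t z)))) (at t))))"

end

theory Submission
  imports Defs
begin

text \<open>
  Along the collisionless flow the energy \<open>H\<close> is conserved (trivially on the torus, for a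
  Hamiltonian flow by differentiating \<open>H\<close> along characteristics), so the sublevel set
  \<open>E = {H \<le> E\<^sub>0}\<close> is invariant; on \<open>E\<close> the velocities are bounded, hence so is the
  collision frequency, \<open>\<kappa> \<le> C\<^sub>1\<close>. Therefore the damped transport semigroup dominates
  \<open>exp (- t C\<^sub>1)\<close> times free transport on measures carried by \<open>E\<close>. Inserting the Duhamel
  formula of the mild solution into itself twice and discarding all other (nonnegative)
  terms yields the bound. The bound on \<open>\<kappa>\<close> uses that \<open>\<integral> b(\<sigma>\<cdot>e) d\<sigma>\<close> does not depend on
  the unit vector \<open>e\<close>, i.e. rotation invariance of the surface measure, which follows from
  that of Lebesgue measure.
\<close>

lemma borel_measurable_pair [measurable (raw)]:
  fixes f :: "'m \<Rightarrow> 'a::second_countable_topology" and g :: "'m \<Rightarrow> 'b::second_countable_topology"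
  assumes "f \<in> borel_measurable M" "g \<in> borel_measurable M"
  shows "(\<lambda>x. (f x, g x)) \<in> borel_measurable M"
proof -
  have "(\<lambda>x. (f x, g x)) \<in> measurable M (borel \<Otimes>\<^sub>M borel)" using assms by measurable
  then show ?thesis by (simp add: borel_prod)
qed

lemma borel_measurable_fst [measurable]:
  "(fst :: 'a::second_countable_topology \<times> 'b::second_countable_topology \<Rightarrow> 'a) \<in> borel_measurable borel"
  by (intro borel_measurable_continuous_onI continuous_intros)

lemma borel_measurable_snd [measurable]:
  "(snd :: 'a::second_countable_topology \<times> 'b::second_countable_topology \<Rightarrow> 'b) \<in> borel_measurable borel"
  by (intro borel_measurable_continuous_onI continuous_intros)

lemma borel_measurable_kernel [measurable (raw)]:
  assumes [measurable]: "b \<in> borel_measurable borel" "f \<in> borel_measurable M"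
    "g \<in> borel_measurable M" "h \<in> borel_measurable M"
  shows "(\<lambda>x. kernel \<gamma> b (f x :: real^'d) (g x) (h x)) \<in> borel_measurable M"
  unfolding kernel_def by measurable

lemma borel_measurable_maxwellian [measurable]: "maxwellian \<in> borel_measurable borel"
  unfolding maxwellian_def by measurable

lemma borel_measurable_post_vel [measurable (raw)]:
  assumes [measurable]: "f \<in> borel_measurable M" "g \<in> borel_measurable M" "h \<in> borel_measurable M"
  shows "(\<lambda>x. post_vel (f x :: real^'d) (g x) (h x)) \<in> borel_measurable M"
  unfolding post_vel_def by measurable

lemma borel_measurable_vec_lambda:
  assumes "\<And>i. (\<lambda>x. f x i) \<in> borel_measurable M"
  shows "(\<lambda>x. (\<chi> i. f x i) :: real^'d) \<in> borel_measurable M"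
proof (rule borel_measurable_euclidean_space[THEN iffD2], intro ballI)
  fix b :: "real^'d" assume "b \<in> Basis"
  then obtain i where "b = axis i 1" unfolding Basis_vec_def by auto
  then have "(\<lambda>x. (\<chi> i. f x i) \<bullet> b) = (\<lambda>x. f x i)" by (simp add: inner_axis fun_eq_iff)
  then show "(\<lambda>x. (\<chi> i. f x i) \<bullet> b) \<in> borel_measurable M" using assms[of i] by simp
qed

lemma borel_measurable_vec_nth [measurable]: "(\<lambda>x::real^'d. x $ i) \<in> borel_measurable borel"
proof -
  have "(\<lambda>x::real^'d. x \<bullet> axis i 1) \<in> borel_measurable borel" by measurable
  then show ?thesis by (simp add: inner_axis)
qed

lemma borel_measurable_frac [measurable]: "(frac :: real \<Rightarrow> real) \<in> borel_measurable borel"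
  unfolding frac_def by measurable

section \<open>Rotation invariance of the surface measure\<close>

lemma borel_measurable_orthogonal_transformation:
  fixes Q :: "'a::euclidean_space \<Rightarrow> 'a"
  shows "orthogonal_transformation Q \<Longrightarrow> Q \<in> borel_measurable borel"
  using orthogonal_transformation_linear linear_continuous_on linear_linear
  by (intro borel_measurable_continuous_onI) blast

text \<open>Up to a null set an open set is a countable disjoint union of balls (Vitali), and an
  orthogonal map sends balls to balls of the same radius and null sets to null sets.\<close>

lemma emeasure_lborel_orthogonal_image_open:
  fixes Q :: "'a::euclidean_space \<Rightarrow> 'a"
  assumes Q: "orthogonal_transformation Q" and U: "open U"
  shows "emeasure lborel (Q ` U) = emeasure lborel U"
proof -
  let ?K = "{(x, r). 0 < r \<and> ball x r \<subseteq> U}"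
  have cover: "\<exists>i. i \<in> ?K \<and> x \<in> ball (fst i) (snd i) \<and> snd i < d" if "x \<in> U" "0 < d" for x d
  proof -
    obtain e where "e > 0" "ball x e \<subseteq> U" using U \<open>x \<in> U\<close> open_contains_ball by blast
    then show ?thesis using \<open>0 < d\<close> by (intro exI[of _ "(x, min e (d / 2))"]) auto
  qed
  obtain C where C: "countable C" "C \<subseteq> ?K"
    and disj: "pairwise (\<lambda>i j. disjnt (ball (fst i) (snd i)) (ball (fst j) (snd j))) C"
    and null: "negligible (U - (\<Union>i\<in>C. ball (fst i) (snd i)))"
    by (rule Vitali_covering_theorem_balls[of U ?K fst snd]) (use cover in blast)+
  define V where "V = (\<Union>i\<in>C. ball (fst i) (snd i))"
  have "V \<subseteq> U" using C unfolding V_def by (force simp: subset_iff)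
  have UV: "U - V \<in> sets borel" using U unfolding V_def by (intro sets.Diff borel_open open_UN) auto
  have inj: "inj Q" using Q by (rule orthogonal_transformation_inj)
  have lin: "linear Q" using Q by (rule orthogonal_transformation_linear)
  have borel_image: "Q ` A \<in> sets borel" if "A \<in> sets borel" for A
  proof -
    have "Q ` A = inv Q -` A"
      using orthogonal_transformation_bij[OF Q]
      by (simp add: bij_vimage_eq_inv_image bij_imp_bij_inv inv_inv_eq)
    moreover have "inv Q \<in> borel_measurable borel"
      using orthogonal_transformation_inv[OF Q] by (rule borel_measurable_orthogonal_transformation)
    ultimately show ?thesis using that by (simp add: measurable_sets_borel)
  qed
  have null_lborel: "A \<in> null_sets lborel" if "A \<in> sets borel" "negligible A" for A :: "'a set"
    using that by (simp add: negligible_iff_null_sets null_sets_completion_iff)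
  have N: "U - V \<in> null_sets lborel" using null UV by (intro null_lborel) (auto simp: V_def)
  have QN: "Q ` (U - V) \<in> null_sets lborel"
  proof (rule null_lborel)
    show "Q ` (U - V) \<in> sets borel" using UV by (rule borel_image)
    show "negligible (Q ` (U - V))"
      using null lin linear_imp_differentiable 
      by (intro negligible_differentiable_image_negligible) (auto simp: V_def differentiable_on_def)
  qed
  have "emeasure lborel (Q ` U) = emeasure lborel (Q ` V \<union> Q ` (U - V))"
    by (simp only: image_Un[symmetric] Un_Diff_cancel Un_absorb1[OF \<open>V \<subseteq> U\<close>])
  also have "\<dots> = emeasure lborel (\<Union>i\<in>C. ball (Q (fst i)) (snd i))"
    using QN by (subst emeasure_Un_null_set)
      (auto simp: V_def image_UN image_orthogonal_transformation_ball[OF Q] intro!: borel_open)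
  also have "\<dots> = (\<integral>\<^sup>+i. emeasure lborel (ball (Q (fst i)) (snd i)) \<partial>count_space C)"
  proof (rule emeasure_UN_countable)
    show "disjoint_family_on (\<lambda>i. ball (Q (fst i)) (snd i)) C"
      using disj unfolding disjoint_family_on_def pairwise_def disjnt_def
      by (simp add: image_orthogonal_transformation_ball[OF Q, symmetric] image_Int[OF inj, symmetric])
  qed (use C in auto)
  also have "\<dots> = (\<integral>\<^sup>+i. emeasure lborel (ball (fst i) (snd i)) \<partial>count_space C)"
    using C by (intro nn_integral_cong) (auto simp: emeasure_ball)
  also have "\<dots> = emeasure lborel V"
    unfolding V_def using disj C
    by (intro emeasure_UN_countable[symmetric]) (auto simp: disjoint_family_on_def pairwise_def disjnt_def)
  also have "\<dots> = emeasure lborel (V \<union> (U - V))"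
    using N by (subst emeasure_Un_null_set) (auto simp: V_def intro!: borel_open)
  also have "V \<union> (U - V) = U" using \<open>V \<subseteq> U\<close> by blast
  finally show ?thesis .
qed

lemma distr_lborel_orthogonal_transformation:
  fixes Q :: "'a::euclidean_space \<Rightarrow> 'a"
  assumes Q: "orthogonal_transformation Q"
  shows "distr lborel borel Q = lborel"
proof (rule lborel_eqI[symmetric])
  fix l u :: 'a
  assume "\<And>b. b \<in> Basis \<Longrightarrow> l \<bullet> b \<le> u \<bullet> b"
  then have "emeasure lborel (box l u) = (\<Prod>b\<in>Basis. (u - l) \<bullet> b)" by simp
  moreover have "Q \<in> borel_measurable borel"
    using Q by (rule borel_measurable_orthogonal_transformation)
  moreover have "Q -` box l u = inv Q ` box l u"
    using orthogonal_transformation_bij[OF Q] by (rule bij_vimage_eq_inv_image)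
  ultimately show "emeasure (distr lborel borel Q) (box l u) = (\<Prod>b\<in>Basis. (u - l) \<bullet> b)"
    by (simp add: emeasure_distr emeasure_lborel_orthogonal_image_open[OF
                  orthogonal_transformation_inv[OF Q] open_box])
qed simp

lemma sets_sphere_measure [simp, measurable_cong]: "sets sphere_measure = sets borel"
  by (simp add: sphere_measure_def)


lemma space_sphere_measure [simp]: "space sphere_measure = UNIV"
  by (simp add: sphere_measure_def)


lemma nn_integral_sphere_measure:
  assumes [measurable]: "g \<in> borel_measurable borel"
  shows "(\<integral>\<^sup>+\<sigma>. g \<sigma> \<partial>(sphere_measure :: (real^'d) measure))
       = real CARD('d) * (\<integral>\<^sup>+x. indicator (ball 0 1) x * g (sgn x) \<partial>lborel)"
  unfolding sphere_measure_def
  by (simp add: nn_integral_density nn_integral_distr nn_integral_cmult)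
     (subst nn_integral_density; simp add: borel_measurable_indicator)


lemma finite_measure_sphere_measure: "finite_measure (sphere_measure :: (real^'d) measure)"
proof
  have "emeasure (sphere_measure :: (real^'d) measure) UNIV
      = real CARD('d) * emeasure lborel (ball (0::real^'d) 1)"
    using nn_integral_sphere_measure[of "\<lambda>_. 1"] by simp
  also have "\<dots> < \<infinity>"
    using emeasure_lborel_ball_finite[of "0::real^'d" 1] by (simp add: ennreal_mult_less_top)
  finally show "emeasure (sphere_measure :: (real^'d) measure) (space sphere_measure) \<noteq> \<infinity>"
    by simp
qed

lemma nn_integral_sphere_measure_orthogonal:
  fixes Q :: "real^'d \<Rightarrow> real^'d"
  assumes Q: "orthogonal_transformation Q" and [measurable]: "g \<in> borel_measurable borel"
  shows "(\<integral>\<^sup>+\<sigma>. g (Q \<sigma>) \<partial>sphere_measure) = (\<integral>\<^sup>+\<sigma>. g \<sigma> \<partial>sphere_measure)"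
proof -
  have [measurable]: "Q \<in> borel_measurable borel"
    using Q by (rule borel_measurable_orthogonal_transformation)
  have "\<And>x. sgn (Q x) = Q (sgn x)"
    using Q by (simp add: sgn_div_norm orthogonal_transformation_norm
                          orthogonal_transformation_linear linear_scale)
  then have "(\<integral>\<^sup>+x. indicator (ball 0 1) x * g (Q (sgn x)) \<partial>lborel)
      = (\<integral>\<^sup>+x. indicator (ball 0 1) x * g (sgn x) \<partial>distr lborel borel Q)"
    using Q by (simp add: nn_integral_distr orthogonal_transformation_norm indicator_def)
  then show ?thesis
    by (simp add: nn_integral_sphere_measure distr_lborel_orthogonal_transformation[OF Q])
qed

lemma nn_integral_sphere_measure_inner_unit:
  fixes e e' :: "real^'d"
  assumes [measurable]: "f \<in> borel_measurable borel" and "norm e = 1" "norm e' = 1"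
  shows "(\<integral>\<^sup>+\<sigma>. f (\<sigma> \<bullet> e) \<partial>sphere_measure) = (\<integral>\<^sup>+\<sigma>. f (\<sigma> \<bullet> e') \<partial>sphere_measure)"
proof -
  obtain Q where Q: "orthogonal_transformation Q" "Q e = e'"
    using orthogonal_transformation_exists_1 assms(2,3) by metis
  then have "\<And>\<sigma>. Q \<sigma> \<bullet> e' = \<sigma> \<bullet> e"
    by (metis orthogonal_transformation_def)
  then have "(\<integral>\<^sup>+\<sigma>. f (\<sigma> \<bullet> e) \<partial>sphere_measure) = (\<integral>\<^sup>+\<sigma>. f (Q \<sigma> \<bullet> e') \<partial>sphere_measure)"
    by simp
  also have "\<dots> = (\<integral>\<^sup>+\<sigma>. f (\<sigma> \<bullet> e') \<partial>sphere_measure)"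
    by (rule nn_integral_sphere_measure_orthogonal[OF Q(1), of "\<lambda>\<sigma>. f (\<sigma> \<bullet> e')"]) simp
  finally show ?thesis .
qed

section \<open>Local boundedness of the collision frequency\<close>

lemma nn_integral_exp_neg_norm_sq_finite:
  "(\<integral>\<^sup>+x. ennreal (exp (- (norm x)\<^sup>2 / 4)) \<partial>(lborel :: (real^'d) measure)) < \<infinity>"
proof -
  have normal: "(\<integral>\<^sup>+t. ennreal (exp (- t\<^sup>2 / 4)) \<partial>lborel) < \<infinity>"
  proof -
    have "\<And>t. ennreal (exp (- t\<^sup>2 / 4))
        = ennreal (sqrt (4 * pi)) * ennreal (normal_density 0 (sqrt 2) t)"
      by (subst ennreal_mult[symmetric]) (auto simp: normal_density_def real_sqrt_mult)
    moreover have "(\<integral>\<^sup>+t. ennreal (normal_density 0 (sqrt 2) t) \<partial>lborel) < \<infinity>"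
    proof -
      have "(\<integral>\<^sup>+t. ennreal (norm (normal_density 0 (sqrt 2) t)) \<partial>lborel) < \<infinity>"
        using integrable_normal_density[of "sqrt 2" 0] unfolding integrable_iff_bounded by auto
      then show ?thesis by simp
    qed
    ultimately show ?thesis
      by (simp add: nn_integral_cmult ennreal_mult_less_top)
  qed
  have product: "\<And>x::real^'d. ennreal (exp (- (norm x)\<^sup>2 / 4)) = (\<Prod>b\<in>Basis. ennreal (exp (- (x \<bullet> b)\<^sup>2 / 4)))"
  proof -
    fix x :: "real^'d"
    have "(norm x)\<^sup>2 = x \<bullet> x" by (rule power2_norm_eq_inner)
    also have "\<dots> = (\<Sum>b\<in>Basis. (x \<bullet> b)\<^sup>2)"
      by (subst euclidean_inner) (simp add: power2_eq_square)
    finally have "(norm x)\<^sup>2 = (\<Sum>b\<in>Basis. (x \<bullet> b)\<^sup>2)" .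
    then show "ennreal (exp (- (norm x)\<^sup>2 / 4)) = (\<Prod>b\<in>Basis. ennreal (exp (- (x \<bullet> b)\<^sup>2 / 4)))"
      by (simp add: prod_ennreal exp_sum[symmetric] sum_negf sum_divide_distrib)
  qed
  have "(\<integral>\<^sup>+x. ennreal (exp (- (norm x)\<^sup>2 / 4)) \<partial>(lborel :: (real^'d) measure))
      = (\<Prod>b\<in>(Basis :: (real^'d) set). \<integral>\<^sup>+t. ennreal (exp (- t\<^sup>2 / 4)) \<partial>lborel)"
    unfolding product by (rule nn_integral_lborel_prod) auto
  also have "\<dots> < \<infinity>"
    using normal by (simp add: less_top[symmetric] power_eq_top_ennreal)
  finally show ?thesis .
qed

lemma powr_le_exp_mult:
  fixes y g :: real
  assumes "0 \<le> y" "0 \<le> g"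
  shows "y powr g \<le> exp (g * y)"
proof (cases "y = 0")
  case False
  then have "y powr g = exp (g * ln y)" using assms by (simp add: powr_def mult.commute)
  also have "\<dots> \<le> exp (g * y)"
    using assms False ln_le_minus_one[of y] by (intro exp_mono mult_left_mono) auto
  finally show ?thesis .
qed simp

lemma maxwellian_le: "maxwellian (v::real^'d) \<le> exp (- (norm v)\<^sup>2 / 2)"
proof -
  have "(2 * pi) powr (- real CARD('d) / 2) \<le> (2 * pi) powr 0"
    using pi_gt3 by (intro powr_mono) auto
  then show ?thesis
    unfolding maxwellian_def by (intro mult_left_le_one_le) auto
qed

lemma powr_dist_maxwellian_le:
  fixes v vs :: "real^'d"
  assumes "0 \<le> \<gamma>" and "norm v \<le> V"
  shows "norm (v - vs) powr \<gamma> * maxwellian vs \<le> exp (\<gamma> * V + \<gamma>\<^sup>2) * exp (- (norm vs)\<^sup>2 / 4)"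
proof -
  let ?r = "norm vs"
  have "norm (v - vs) \<le> V + ?r" using assms(2) norm_triangle_ineq4[of v vs] by linarith
  then have "norm (v - vs) powr \<gamma> \<le> exp (\<gamma> * (V + ?r))"
    using assms order_trans[OF norm_ge_zero assms(2)]
    by (intro order_trans[OF powr_mono2 powr_le_exp_mult]) auto
  then have "norm (v - vs) powr \<gamma> * maxwellian vs \<le> exp (\<gamma> * (V + ?r)) * exp (- ?r\<^sup>2 / 2)"
    using maxwellian_le[of vs] by (intro mult_mono) (auto simp: maxwellian_def)
  also have "\<dots> \<le> exp (\<gamma> * V + \<gamma>\<^sup>2) * exp (- ?r\<^sup>2 / 4)"
  proof -
    have "\<gamma> * ?r \<le> \<gamma>\<^sup>2 + ?r\<^sup>2 / 4"
      using sum_power2_ge_zero[of 0 "\<gamma> - ?r / 2"] by (simp add: power2_eq_square algebra_simps)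
    then show ?thesis by (simp add: exp_add[symmetric] algebra_simps)
  qed
  finally show ?thesis .
qed

lemma coll_freq_bounded:
  fixes V \<gamma> :: real
  assumes "0 \<le> \<gamma>" and b_nonneg: "\<forall>s. 0 \<le> b s" and [measurable]: "b \<in> borel_measurable borel"
    and b_int: "\<forall>e::real^'d. norm e = 1 \<longrightarrow> integrable sphere_measure (\<lambda>\<sigma>. b (\<sigma> \<bullet> e))"
  shows "\<exists>C>0. \<forall>v::real^'d. norm v \<le> V \<longrightarrow> coll_freq \<gamma> b v \<le> C"
proof -
  define e0 :: "real^'d" where "e0 = axis undefined 1" \<comment> \<open>any unit vector\<close>
  define G where "G = (\<integral>\<^sup>+\<sigma>. ennreal (b (\<sigma> \<bullet> e0)) \<partial>(sphere_measure :: (real^'d) measure))"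
  define K where "K = exp (\<gamma> * V + \<gamma>\<^sup>2)"
  define Z where "Z = (\<integral>\<^sup>+x. ennreal (exp (- (norm x)\<^sup>2 / 4)) \<partial>(lborel :: (real^'d) measure))"
  have "G < \<infinity>"
    using b_int b_nonneg unfolding G_def e0_def by (simp add: integrable_iff_bounded)
  moreover have "Z < \<infinity>"
    unfolding Z_def by (rule nn_integral_exp_neg_norm_sq_finite)
  ultimately have finite: "ennreal K * Z * G < \<infinity>"
    by (simp add: ennreal_mult_less_top)
  have G_unit: "(\<integral>\<^sup>+\<sigma>. ennreal (b (\<sigma> \<bullet> e)) \<partial>sphere_measure) = G" if "norm e = 1" for e :: "real^'d"
    unfolding G_def e0_def using that by (intro nn_integral_sphere_measure_inner_unit) auto
  have bound: "coll_freq \<gamma> b v \<le> enn2real (ennreal K * Z * G)" if v: "norm v \<le> V" for v :: "real^'d"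
  proof -
    have sphere: "(\<integral>\<^sup>+\<sigma>. ennreal (kernel \<gamma> b v vs \<sigma> * maxwellian vs) \<partial>sphere_measure)
        \<le> ennreal K * ennreal (exp (- (norm vs)\<^sup>2 / 4)) * G" for vs
    proof (cases "vs = v")
      case False
      let ?a = "norm (v - vs) powr \<gamma> * maxwellian vs"
      have "?a \<ge> 0" by (simp add: maxwellian_def)
      then have "(\<integral>\<^sup>+\<sigma>. ennreal (kernel \<gamma> b v vs \<sigma> * maxwellian vs) \<partial>sphere_measure)
          = ennreal ?a * (\<integral>\<^sup>+\<sigma>. ennreal (b (\<sigma> \<bullet> sgn (v - vs))) \<partial>sphere_measure)"
        using b_nonneg
        by (subst nn_integral_cmult[symmetric])
           (auto intro!: nn_integral_cong simp: kernel_def ennreal_mult[symmetric] mult_ac)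
      also have "\<dots> = ennreal ?a * G"
        using False by (simp add: G_unit norm_sgn)
      also have "\<dots> \<le> ennreal K * ennreal (exp (- (norm vs)\<^sup>2 / 4)) * G"
        using powr_dist_maxwellian_le[OF assms(1) v, of vs]
        by (intro mult_right_mono) (auto simp: K_def ennreal_mult[symmetric] intro!: ennreal_leI)
      finally show ?thesis .
    qed (simp add: kernel_def)
    have "(\<integral>\<^sup>+vs. \<integral>\<^sup>+\<sigma>. ennreal (kernel \<gamma> b v vs \<sigma> * maxwellian vs) \<partial>sphere_measure \<partial>lborel)
        \<le> (\<integral>\<^sup>+vs. ennreal K * ennreal (exp (- (norm (vs::real^'d))\<^sup>2 / 4)) * G \<partial>lborel)"
      by (rule nn_integral_mono, rule sphere)
    also have "\<dots> = ennreal K * Z * G"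
      unfolding Z_def by (simp add: nn_integral_multc nn_integral_cmult)
    finally show ?thesis
      unfolding coll_freq_def using finite by (intro enn2real_mono) auto
  qed
  show ?thesis
  proof (intro exI conjI allI impI)
    show "0 < enn2real (ennreal K * Z * G) + 1"
      using enn2real_nonneg[of "ennreal K * Z * G"] by linarith
    show "coll_freq \<gamma> b v \<le> enn2real (ennreal K * Z * G) + 1" if "norm v \<le> V" for v :: "real^'d"
      using bound[OF that] by linarith
  qed
qed

section \<open>The gain operator in weak form\<close>

definition gain_dual :: "real \<Rightarrow> (real \<Rightarrow> real) \<Rightarrow> ('d::finite state \<Rightarrow> ennreal) \<Rightarrow> 'd state \<Rightarrow> ennreal"
  where "gain_dual \<gamma> b h z = (\<integral>\<^sup>+vs. \<integral>\<^sup>+\<sigma>. ennreal (kernel \<gamma> b (snd z) vs \<sigma> * maxwellian vs)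
          * h (fst z, post_vel (snd z) vs \<sigma>) \<partial>sphere_measure \<partial>lborel)"

lemma measurable_gain_dual:
  fixes g :: "'p \<Rightarrow> 'd::finite state"
  assumes [measurable]: "b \<in> borel_measurable borel" "case_prod h \<in> borel_measurable (N \<Otimes>\<^sub>M borel)"
    "g \<in> borel_measurable N"
  shows "(\<lambda>p. gain_dual \<gamma> b (h p) (g p)) \<in> borel_measurable N"
proof -
  interpret sphere: finite_measure "sphere_measure :: (real^'d) measure"
    by (rule finite_measure_sphere_measure)
  have "(\<lambda>((p, vs), \<sigma>). ennreal (kernel \<gamma> b (snd (g p)) vs \<sigma> * maxwellian vs)
          * h p (fst (g p), post_vel (snd (g p)) vs \<sigma>))
      \<in> borel_measurable ((N \<Otimes>\<^sub>M lborel) \<Otimes>\<^sub>M sphere_measure)"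
  proof -
    have "(\<lambda>x. (fst (fst x),
        (fst (g (fst (fst x))), post_vel (snd (g (fst (fst x)))) (snd (fst x)) (snd x))))
       \<in> measurable ((N \<Otimes>\<^sub>M lborel) \<Otimes>\<^sub>M sphere_measure) (N \<Otimes>\<^sub>M borel)" by measurable
    from measurable_comp[OF this assms(2)] show ?thesis
      by (simp add: o_def case_prod_beta')
  qed
  then have "(\<lambda>x. \<integral>\<^sup>+\<sigma>. ennreal (kernel \<gamma> b (snd (g (fst x))) (snd x) \<sigma> * maxwellian (snd x))
          * h (fst x) (fst (g (fst x)), post_vel (snd (g (fst x))) (snd x) \<sigma>) \<partial>sphere_measure)
      \<in> borel_measurable (N \<Otimes>\<^sub>M lborel)"
    by (intro sphere.borel_measurable_nn_integral) (simp add: case_prod_beta')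
  then show ?thesis
    unfolding gain_dual_def by (intro lborel.borel_measurable_nn_integral) (simp add: case_prod_beta')
qed

lemma borel_measurable_gain_dual [measurable]:
  assumes "b \<in> borel_measurable borel" and "h \<in> borel_measurable borel"
  shows "gain_dual \<gamma> b h \<in> borel_measurable (borel :: 'd::finite state measure)"
  using measurable_gain_dual[OF assms(1), of "\<lambda>_. h" borel "\<lambda>z. z"] assms(2) by measurable

lemma gain_dual_suminf:
  fixes h :: "nat \<Rightarrow> 'd::finite state \<Rightarrow> ennreal"
  assumes [measurable]: "b \<in> borel_measurable borel" "\<And>i. h i \<in> borel_measurable borel"
  shows "gain_dual \<gamma> b (\<lambda>w. \<Sum>i. h i w) z = (\<Sum>i. gain_dual \<gamma> b (h i) z)"
proof -
  interpret sphere: finite_measure "sphere_measure :: (real^'d) measure"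
    by (rule finite_measure_sphere_measure)
  let ?f = "\<lambda>i vs \<sigma>.
    ennreal (kernel \<gamma> b (snd z) vs \<sigma> * maxwellian vs) * h i (fst z, post_vel (snd z) vs \<sigma>)"
  have inner: "(\<lambda>vs. \<integral>\<^sup>+\<sigma>. ?f i vs \<sigma> \<partial>sphere_measure) \<in> borel_measurable lborel" for i
  proof -
    have "(\<lambda>x. ?f i (fst x) (snd x)) \<in> borel_measurable (lborel \<Otimes>\<^sub>M sphere_measure)"
      by measurable
    then show ?thesis
      by (intro sphere.borel_measurable_nn_integral) (simp add: case_prod_beta')
  qed
  have "gain_dual \<gamma> b (\<lambda>w. \<Sum>i. h i w) z = (\<integral>\<^sup>+vs. \<integral>\<^sup>+\<sigma>. (\<Sum>i. ?f i vs \<sigma>) \<partial>sphere_measure \<partial>lborel)"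
    unfolding gain_dual_def by simp
  also have "\<dots> = (\<integral>\<^sup>+vs. (\<Sum>i. \<integral>\<^sup>+\<sigma>. ?f i vs \<sigma> \<partial>sphere_measure) \<partial>lborel)"
    by (intro nn_integral_cong nn_integral_suminf) measurable
  also have "\<dots> = (\<Sum>i. gain_dual \<gamma> b (h i) z)"
    unfolding gain_dual_def using inner by (intro nn_integral_suminf) auto
  finally show ?thesis .
qed

lemma sets_gain [simp, measurable_cong]: "sets (gain \<gamma> b \<mu>) = sets borel"
  unfolding gain_def using sets.sigma_sets_eq[of borel] by simp

lemma emeasure_gain:
  fixes \<mu> :: "'d::finite state measure"
  assumes [measurable]: "b \<in> borel_measurable borel" and sets_\<mu>: "sets \<mu> = sets borel"
    and "A \<in> sets borel"
  shows "emeasure (gain \<gamma> b \<mu>) A = (\<integral>\<^sup>+z. gain_dual \<gamma> b (indicator A) z \<partial>\<mu>)"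
proof -
  have "countably_additive (sets borel) (\<lambda>A. \<integral>\<^sup>+z. gain_dual \<gamma> b (indicator A) z \<partial>\<mu>)"
  proof (rule countably_additiveI)
    fix F :: "nat \<Rightarrow> 'd state set"
    assume F: "range F \<subseteq> sets borel" "disjoint_family F"
    then have [measurable]: "\<And>i. F i \<in> sets borel" by auto
    have "indicator (\<Union>(range F)) = (\<lambda>w. \<Sum>i. indicator (F i) w :: ennreal)"
      using suminf_indicator[OF F(2)] by (auto simp: fun_eq_iff)
    then have "\<And>z. gain_dual \<gamma> b (indicator (\<Union>(range F))) z = (\<Sum>i. gain_dual \<gamma> b (indicator (F i)) z)"
      by (simp add: gain_dual_suminf)
    then show "(\<Sum>i. \<integral>\<^sup>+z. gain_dual \<gamma> b (indicator (F i)) z \<partial>\<mu>)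
        = (\<integral>\<^sup>+z. gain_dual \<gamma> b (indicator (\<Union>(range F))) z \<partial>\<mu>)"
      by (simp add: nn_integral_suminf measurable_cong_sets[OF sets_\<mu> refl])
  qed
  then have "emeasure (gain \<gamma> b \<mu>) A = (\<integral>\<^sup>+z. gain_dual \<gamma> b (indicator A) z \<partial>\<mu>)"
    unfolding gain_def gain_dual_def using assms(3) sets.sigma_algebra_axioms[of borel]
    by (subst emeasure_measure_of_sigma) (auto simp: positive_def)
  then show ?thesis .
qed

lemma borel_measurable_coll_freq [measurable]:
  assumes [measurable]: "b \<in> borel_measurable borel"
  shows "(coll_freq \<gamma> b :: real^'d::finite \<Rightarrow> real) \<in> borel_measurable borel"
proof -
  have "coll_freq \<gamma> b = (\<lambda>v::real^'d. enn2real (gain_dual \<gamma> b (\<lambda>_. 1) (0::real^'d, v)))"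
    by (simp add: fun_eq_iff coll_freq_def gain_dual_def)
  moreover have "(\<lambda>v::real^'d. gain_dual \<gamma> b (\<lambda>_. 1) (0::real^'d, v)) \<in> borel_measurable borel"
    by (rule measurable_gain_dual) auto
  ultimately show ?thesis by simp
qed

section \<open>Lower bounds from the Duhamel formula\<close>

text \<open>Unlike \<open>nn_integral_cmult\<close>, this needs no measurability of \<open>f\<close>.\<close>

lemma nn_integral_cmult_le: "c * integral\<^sup>N M f \<le> (\<integral>\<^sup>+ x. c * f x \<partial>M)"
proof -
  have "c * integral\<^sup>N M f = (SUP g \<in> {g. simple_function M g \<and> g \<le> f}. c * integral\<^sup>S M g)"
    unfolding nn_integral_def by (simp add: SUP_mult_left_ennreal)
  also have "\<dots> \<le> (\<integral>\<^sup>+ x. c * f x \<partial>M)"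
  proof (rule SUP_least)
    fix g assume g: "g \<in> {g. simple_function M g \<and> g \<le> f}"
    then have "c * integral\<^sup>S M g = integral\<^sup>S M (\<lambda>x. c * g x)" by simp
    also have "\<dots> = integral\<^sup>N M (\<lambda>x. c * g x)"
      using g by (intro nn_integral_eq_simple_integral[symmetric]) auto
    also have "\<dots> \<le> (\<integral>\<^sup>+ x. c * f x \<partial>M)"
      using g by (intro nn_integral_mono mult_left_mono) (auto simp: le_fun_def)
    finally show "c * integral\<^sup>S M g \<le> (\<integral>\<^sup>+ x. c * f x \<partial>M)" .
  qed
  finally show ?thesis .
qed

lemma nn_integral_mixture_lower_bound:
  fixes \<nu> :: "'a::topological_space measure" and X :: "real \<Rightarrow> 'a measure"
  assumes sets_\<nu>: "sets \<nu> = sets borel" and sets_X: "\<And>r. sets (X r) = sets borel"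
    and measurable_X: "\<And>B. B \<in> sets borel \<Longrightarrow> (\<lambda>r. emeasure (X r) B) \<in> borel_measurable borel"
    and lower: "\<And>B. B \<in> sets borel \<Longrightarrow>
      c * (\<integral>\<^sup>+ r. emeasure (X r) B * indicator I r \<partial>lborel) \<le> emeasure \<nu> B"
    and [measurable]: "I \<in> sets borel" and u: "u \<in> borel_measurable borel"
  shows "(\<lambda>r. \<integral>\<^sup>+ x. u x \<partial>X r) \<in> borel_measurable borel \<and>
         c * (\<integral>\<^sup>+ r. (\<integral>\<^sup>+ x. u x \<partial>X r) * indicator I r \<partial>lborel) \<le> (\<integral>\<^sup>+ x. u x \<partial>\<nu>)"
  using u
proof (induct rule: borel_measurable_induct)
  case (cong f g)
  have sp: "\<And>r. space (X r) = UNIV" using sets_eq_imp_space_eq[OF sets_X] by simp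
  have spn: "space \<nu> = UNIV" using sets_eq_imp_space_eq[OF sets_\<nu>] by simp
  have "\<And>r. (\<integral>\<^sup>+ x. f x \<partial>X r) = (\<integral>\<^sup>+ x. g x \<partial>X r)"
    using cong(3) by (intro nn_integral_cong) (auto simp: sp)
  moreover have "(\<integral>\<^sup>+ x. f x \<partial>\<nu>) = (\<integral>\<^sup>+ x. g x \<partial>\<nu>)"
    using cong(3) by (intro nn_integral_cong) (auto simp: spn)
  ultimately show ?case using cong(4) by simp
next
  case (set A)
  have "\<And>r. (\<integral>\<^sup>+ x. indicator A x \<partial>X r) = emeasure (X r) A"
    using set sets_X by (intro nn_integral_indicator) auto
  moreover have "(\<integral>\<^sup>+ x. indicator A x \<partial>\<nu>) = emeasure \<nu> A"
    using set sets_\<nu> by (intro nn_integral_indicator) auto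
  ultimately show ?case using measurable_X[OF set] lower[OF set] by simp
next
  case (mult u c')
  have um: "\<And>r. u \<in> borel_measurable (X r)" by (subst measurable_cong_sets[OF sets_X refl]) (rule mult(2))
  have umn: "u \<in> borel_measurable \<nu>" by (subst measurable_cong_sets[OF sets_\<nu> refl]) (rule mult(2))
  have e1: "\<And>r. (\<integral>\<^sup>+ x. c' * u x \<partial>X r) = c' * (\<integral>\<^sup>+ x. u x \<partial>X r)"
    using um by (intro nn_integral_cmult) auto
  have m: "(\<lambda>r. \<integral>\<^sup>+ x. u x \<partial>X r) \<in> borel_measurable borel" using mult(4) by simp
  then have m': "(\<lambda>r. (\<integral>\<^sup>+ x. u x \<partial>X r) * indicator I r) \<in> borel_measurable lborel" by measurable
  have "c * (\<integral>\<^sup>+ r. (\<integral>\<^sup>+ x. c' * u x \<partial>X r) * indicator I r \<partial>lborel)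
      = c' * (c * (\<integral>\<^sup>+ r. (\<integral>\<^sup>+ x. u x \<partial>X r) * indicator I r \<partial>lborel))"
    using nn_integral_cmult[OF m', of c'] by (simp add: e1 mult.assoc mult.left_commute)
  also have "\<dots> \<le> c' * (\<integral>\<^sup>+ x. u x \<partial>\<nu>)" using mult(4) by (intro mult_left_mono) auto
  also have "\<dots> = (\<integral>\<^sup>+ x. c' * u x \<partial>\<nu>)" using umn by (intro nn_integral_cmult[symmetric]) auto
  finally show ?case using m by (simp add: e1)
next
  case (add u v)
  have um: "\<And>r. u \<in> borel_measurable (X r)" "\<And>r. v \<in> borel_measurable (X r)"
    by (subst measurable_cong_sets[OF sets_X refl], rule add)+
  have umn: "u \<in> borel_measurable \<nu>" "v \<in> borel_measurable \<nu>"
    by (subst measurable_cong_sets[OF sets_\<nu> refl], rule add)+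
  have e1: "\<And>r. (\<integral>\<^sup>+ x. v x + u x \<partial>X r) = (\<integral>\<^sup>+ x. v x \<partial>X r) + (\<integral>\<^sup>+ x. u x \<partial>X r)"
    using um by (intro nn_integral_add) auto
  have mu: "(\<lambda>r. \<integral>\<^sup>+ x. u x \<partial>X r) \<in> borel_measurable borel" using add(3) by simp
  have mv: "(\<lambda>r. \<integral>\<^sup>+ x. v x \<partial>X r) \<in> borel_measurable borel" using add(7) by simp
  have "c * (\<integral>\<^sup>+ r. (\<integral>\<^sup>+ x. v x + u x \<partial>X r) * indicator I r \<partial>lborel)
     = c * (\<integral>\<^sup>+ r. (\<integral>\<^sup>+ x. v x \<partial>X r) * indicator I r \<partial>lborel)
       + c * (\<integral>\<^sup>+ r. (\<integral>\<^sup>+ x. u x \<partial>X r) * indicator I r \<partial>lborel)"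
    unfolding e1 distrib_right
    by (subst nn_integral_add) (use mu mv in \<open>auto simp: distrib_left\<close>)
  also have "\<dots> \<le> (\<integral>\<^sup>+ x. v x \<partial>\<nu>) + (\<integral>\<^sup>+ x. u x \<partial>\<nu>)"
    using add(3) add(7) by (intro add_mono) auto
  also have "\<dots> = (\<integral>\<^sup>+ x. v x + u x \<partial>\<nu>)" using umn by (intro nn_integral_add[symmetric]) auto
  finally show ?case using mu mv e1 by simp
next
  case (seq U)
  have um: "\<And>i r. U i \<in> borel_measurable (X r)" by (subst measurable_cong_sets[OF sets_X refl]) (rule seq)
  have umn: "\<And>i. U i \<in> borel_measurable \<nu>" by (subst measurable_cong_sets[OF sets_\<nu> refl]) (rule seq)
  have e1: "\<And>r. (\<integral>\<^sup>+ x. (SUP i. U i) x \<partial>X r) = (SUP i. \<integral>\<^sup>+ x. U i x \<partial>X r)"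
    unfolding SUP_apply by (rule nn_integral_monotone_convergence_SUP[OF seq(4) um])
  have mi: "\<And>i. (\<lambda>r. \<integral>\<^sup>+ x. U i x \<partial>X r) \<in> borel_measurable borel" using seq(3) by simp
  have inc: "incseq (\<lambda>i r. (\<integral>\<^sup>+ x. U i x \<partial>X r) * indicator I r)"
    using seq(4) by (auto simp: incseq_def le_fun_def intro!: mult_right_mono nn_integral_mono)
  have "c * (\<integral>\<^sup>+ r. (\<integral>\<^sup>+ x. (SUP i. U i) x \<partial>X r) * indicator I r \<partial>lborel)
     = c * (\<integral>\<^sup>+ r. (SUP i. (\<integral>\<^sup>+ x. U i x \<partial>X r) * indicator I r) \<partial>lborel)"
    unfolding e1 by (simp only: SUP_mult_right_ennreal)
  also have "\<dots> = c * (SUP i. \<integral>\<^sup>+ r. (\<integral>\<^sup>+ x. U i x \<partial>X r) * indicator I r \<partial>lborel)"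
    using mi inc by (subst nn_integral_monotone_convergence_SUP) auto
  also have "\<dots> = (SUP i. c * \<integral>\<^sup>+ r. (\<integral>\<^sup>+ x. U i x \<partial>X r) * indicator I r \<partial>lborel)"
    by (simp add: SUP_mult_left_ennreal)
  also have "\<dots> \<le> (SUP i. \<integral>\<^sup>+ x. U i x \<partial>\<nu>)"
    using seq(3) by (intro SUP_mono) auto
  also have "\<dots> = (\<integral>\<^sup>+ x. (SUP i. U i) x \<partial>\<nu>)"
    unfolding SUP_apply by (rule nn_integral_monotone_convergence_SUP[OF seq(4) umn, symmetric])
  finally show ?case using mi e1 by simp
qed

lemma sets_transport [simp, measurable_cong]: "sets (transport Fl t \<mu>) = sets borel"
  by (simp add: transport_def)

lemma sets_damped [simp, measurable_cong]: "sets (damped Fl k t \<mu>) = sets borel"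
  by (simp add: damped_def)

lemma sets_restr [simp, measurable_cong]: "sets (restr E \<mu>) = sets \<mu>"
  by (simp add: restr_def)

locale bounded_collision_region =
  fixes \<gamma> :: real and b :: "real \<Rightarrow> real" and Fl :: "real \<Rightarrow> 'd::finite state \<Rightarrow> 'd state"
    and E :: "'d state set" and C :: real
  assumes b_measurable [measurable]: "b \<in> borel_measurable borel"
    and flow_measurable: "(\<lambda>p. Fl (fst p) (snd p)) \<in> borel_measurable (borel \<Otimes>\<^sub>M borel)"
    and E_borel [measurable]: "E \<in> sets borel"
    and E_invariant: "\<And>z \<tau>. z \<in> E \<Longrightarrow> Fl \<tau> z \<in> E"
    and coll_freq_le: "\<And>z. z \<in> E \<Longrightarrow> coll_freq \<gamma> b (snd z) \<le> C"
    and C_pos: "C > 0"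
begin

abbreviation "\<kappa> \<equiv> coll_freq \<gamma> b"

abbreviation "scatter_rate B \<equiv> gain_dual \<gamma> b (indicator B)"

lemma measurable_flow [measurable (raw)]:
  assumes "f \<in> borel_measurable M" "g \<in> borel_measurable M"
  shows "(\<lambda>x. Fl (f x) (g x)) \<in> borel_measurable M"
proof -
  have "(\<lambda>x. (f x, g x)) \<in> measurable M (borel \<Otimes>\<^sub>M borel)" using assms by measurable
  from measurable_comp[OF this flow_measurable] show ?thesis by (simp add: o_def)
qed

lemma borel_measurable_flow [measurable]: "Fl \<tau> \<in> borel_measurable borel"
  using measurable_flow[of "\<lambda>_. \<tau>" borel "\<lambda>x. x"] by simp

lemma sets_flow_vimage [measurable]: "A \<in> sets borel \<Longrightarrow> Fl \<tau> -` A \<in> sets borel"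
  using measurable_sets[OF borel_measurable_flow, of A] by simp

lemma borel_measurable_scatter_rate [measurable]:
  "B \<in> sets borel \<Longrightarrow> scatter_rate B \<in> borel_measurable borel"
  by (intro borel_measurable_gain_dual b_measurable) simp

definition survival :: "real \<Rightarrow> 'd state \<Rightarrow> ennreal"
  where "survival \<tau> z =
    ennreal (exp (- enn2real (\<integral>\<^sup>+\<sigma>. ennreal (\<kappa> (snd (Fl \<sigma> z))) * indicator {0..\<tau>} \<sigma> \<partial>lborel)))"

lemma damped_eq_survival: "damped Fl \<kappa> \<tau> \<nu> = distr (density \<nu> (survival \<tau>)) borel (Fl \<tau>)"
  unfolding damped_def survival_def ..

lemma borel_measurable_survival [measurable]: "survival \<tau> \<in> borel_measurable borel"
proof -
  have "(\<lambda>x. ennreal (\<kappa> (snd (Fl (snd x) (fst x)))) * indicator {0..\<tau>} (snd x))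
      \<in> borel_measurable (borel \<Otimes>\<^sub>M borel :: ('d state \<times> real) measure)"
    by measurable
  moreover have "sets (borel \<Otimes>\<^sub>M lborel) = sets (borel \<Otimes>\<^sub>M borel :: ('d state \<times> real) measure)"
    by (intro sets_pair_measure_cong) auto
  ultimately have "(\<lambda>z. \<integral>\<^sup>+\<sigma>. ennreal (\<kappa> (snd (Fl \<sigma> z))) * indicator {0..\<tau>} \<sigma> \<partial>lborel)
      \<in> borel_measurable borel"
    by (intro lborel.borel_measurable_nn_integral)
       (simp add: case_prod_beta' measurable_cong_sets[of "borel \<Otimes>\<^sub>M lborel"])
  then show ?thesis unfolding survival_def by measurable
qed

lemma survival_lower_bound:
  assumes "z \<in> E" "\<tau> \<ge> 0"
  shows "ennreal (exp (- \<tau> * C)) \<le> survival \<tau> z"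
proof -
  have "(\<integral>\<^sup>+\<sigma>. ennreal (\<kappa> (snd (Fl \<sigma> z))) * indicator {0..\<tau>} \<sigma> \<partial>lborel)
      \<le> (\<integral>\<^sup>+\<sigma>. ennreal C * indicator {0..\<tau>} \<sigma> \<partial>lborel)"
    using coll_freq_le[OF E_invariant[OF assms(1)]]
    by (intro nn_integral_mono mult_right_mono ennreal_leI) auto
  also have "\<dots> = ennreal (C * \<tau>)"
    using assms C_pos by (simp add: nn_integral_cmult_indicator ennreal_mult)
  finally have "enn2real (\<integral>\<^sup>+\<sigma>. ennreal (\<kappa> (snd (Fl \<sigma> z))) * indicator {0..\<tau>} \<sigma> \<partial>lborel) \<le> C * \<tau>"
    using assms C_pos by (intro enn2real_leI) auto
  then show ?thesis unfolding survival_def by (intro ennreal_leI) (simp add: mult.commute)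
qed

lemma emeasure_damped_lower:
  assumes sets_\<nu>: "sets \<nu> = sets borel" and "\<tau> \<ge> 0" and [measurable]: "A \<in> sets borel"
  shows "ennreal (exp (- \<tau> * C)) * emeasure \<nu> (Fl \<tau> -` A \<inter> E) \<le> emeasure (damped Fl \<kappa> \<tau> \<nu>) A"
proof -
  have flow: "Fl \<tau> \<in> measurable (density \<nu> (survival \<tau>)) borel"
    by (subst measurable_cong_sets[of _ borel]) (auto simp: sets_\<nu>)
  have survival: "survival \<tau> \<in> borel_measurable \<nu>"
    by (subst measurable_cong_sets[OF sets_\<nu> refl]) simp
  have [measurable]: "Fl \<tau> -` A \<inter> E \<in> sets \<nu>" "Fl \<tau> -` A \<in> sets \<nu>"
    unfolding sets_\<nu> by measurable
  have "space \<nu> = UNIV" using sets_eq_imp_space_eq[OF sets_\<nu>] by simp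
  then have "emeasure (damped Fl \<kappa> \<tau> \<nu>) A = (\<integral>\<^sup>+z. survival \<tau> z * indicator (Fl \<tau> -` A) z \<partial>\<nu>)"
    unfolding damped_eq_survival
    by (subst emeasure_distr[OF flow], simp, subst emeasure_density[OF survival]) auto
  also have "\<dots> \<ge> (\<integral>\<^sup>+z. ennreal (exp (- \<tau> * C)) * indicator (Fl \<tau> -` A \<inter> E) z \<partial>\<nu>)"
    using survival_lower_bound \<open>\<tau> \<ge> 0\<close> by (intro nn_integral_mono) (auto simp: indicator_def)
  ultimately show ?thesis by (simp add: nn_integral_cmult_indicator)
qed

lemma nn_integral_damped_return_lower:
  assumes "z0 \<in> E" and "\<tau> \<ge> 0" and [measurable]: "P \<in> borel_measurable borel"
  shows "ennreal (exp (- \<tau> * C)) * P (Fl \<tau> z0) \<le> (\<integral>\<^sup>+x. P x \<partial>damped Fl \<kappa> \<tau> (return borel z0))"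
proof -
  have flow: "Fl \<tau> \<in> measurable (density (return borel z0) (survival \<tau>)) borel"
    by (subst measurable_cong_sets[of _ borel]) auto
  have "(\<integral>\<^sup>+x. P x \<partial>damped Fl \<kappa> \<tau> (return borel z0))
      = (\<integral>\<^sup>+x. survival \<tau> x * P (Fl \<tau> x) \<partial>return borel z0)"
    unfolding damped_eq_survival
    by (subst nn_integral_distr[OF flow], simp, rule nn_integral_density) auto
  also have "\<dots> = survival \<tau> z0 * P (Fl \<tau> z0)"
    by (rule nn_integral_return) auto
  finally show ?thesis using survival_lower_bound[OF assms(1,2)] by (simp add: mult_right_mono)
qed

lemma emeasure_transport_restr:
  assumes sets_\<mu>: "sets \<mu> = sets borel" and [measurable]: "A \<in> sets borel"
  shows "emeasure (transport Fl \<tau> (restr E \<mu>)) A = emeasure \<mu> (Fl \<tau> -` A \<inter> E)"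
proof -
  have flow: "Fl \<tau> \<in> measurable (restr E \<mu>) borel"
    by (subst measurable_cong_sets[of _ borel]) (auto simp: sets_\<mu>)
  have E: "indicator E \<in> borel_measurable \<mu>"
    by (subst measurable_cong_sets[OF sets_\<mu> refl]) simp
  have [measurable]: "Fl \<tau> -` A \<inter> E \<in> sets \<mu>" "Fl \<tau> -` A \<in> sets \<mu>"
    unfolding sets_\<mu> by measurable
  have "space \<mu> = UNIV" using sets_eq_imp_space_eq[OF sets_\<mu>] by simp
  then have "emeasure (transport Fl \<tau> (restr E \<mu>)) A = (\<integral>\<^sup>+z. indicator E z * indicator (Fl \<tau> -` A) z \<partial>\<mu>)"
    unfolding transport_def
    by (subst emeasure_distr[OF flow], simp, unfold restr_def, subst emeasure_density[OF E]) auto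
  also have "\<dots> = (\<integral>\<^sup>+z. indicator (Fl \<tau> -` A \<inter> E) z \<partial>\<mu>)"
    by (intro nn_integral_cong) (auto simp: indicator_def)
  finally show ?thesis by simp
qed

lemma nn_integral_transport_restr_return:
  assumes "z0 \<in> E" and [measurable]: "P \<in> borel_measurable borel"
  shows "(\<integral>\<^sup>+x. P x \<partial>transport Fl \<tau> (restr E (return borel z0))) = P (Fl \<tau> z0)"
proof -
  have flow: "Fl \<tau> \<in> measurable (density (return borel z0) (indicator E)) borel"
    by (subst measurable_cong_sets[of _ borel]) auto
  have "(\<integral>\<^sup>+x. P x \<partial>transport Fl \<tau> (restr E (return borel z0)))
      = (\<integral>\<^sup>+x. indicator E x * P (Fl \<tau> x) \<partial>return borel z0)"
    unfolding transport_def restr_def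
    by (subst nn_integral_distr[OF flow], simp, rule nn_integral_density) auto
  also have "\<dots> = P (Fl \<tau> z0)"
    using assms(1) by (subst nn_integral_return) auto
  finally show ?thesis .
qed

definition one_collision :: "'d state \<Rightarrow> real \<Rightarrow> real \<Rightarrow> 'd state measure"
  where "one_collision z0 s r =
    transport Fl (s - r) (restr E (gain \<gamma> b (transport Fl r (restr E (return borel z0)))))"

lemma sets_one_collision [simp]: "sets (one_collision z0 s r) = sets borel"
  by (simp add: one_collision_def)

lemma emeasure_one_collision:
  assumes "z0 \<in> E" and [measurable]: "B \<in> sets borel"
  shows "emeasure (one_collision z0 s r) B = scatter_rate (Fl (s - r) -` B \<inter> E) (Fl r z0)"
proof -
  have "emeasure (one_collision z0 s r) B
      = emeasure (gain \<gamma> b (transport Fl r (restr E (return borel z0)))) (Fl (s - r) -` B \<inter> E)"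
    unfolding one_collision_def by (rule emeasure_transport_restr) auto
  also have "\<dots> = (\<integral>\<^sup>+z. scatter_rate (Fl (s - r) -` B \<inter> E) z \<partial>transport Fl r (restr E (return borel z0)))"
    by (rule emeasure_gain) auto
  also have "\<dots> = scatter_rate (Fl (s - r) -` B \<inter> E) (Fl r z0)"
    by (rule nn_integral_transport_restr_return[OF assms(1)]) auto
  finally show ?thesis .
qed

lemma borel_measurable_emeasure_one_collision:
  assumes "z0 \<in> E" and [measurable]: "B \<in> sets borel"
  shows "(\<lambda>r. emeasure (one_collision z0 s r) B) \<in> borel_measurable borel"
proof -
  have "(\<lambda>x::real \<times> 'd state. indicator B (Fl (s - fst x) (snd x)) * indicator E (snd x) :: ennreal)
      \<in> borel_measurable (borel \<Otimes>\<^sub>M borel)"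
    by measurable
  then have "(\<lambda>r. gain_dual \<gamma> b (\<lambda>w. indicator B (Fl (s - r) w) * indicator E w) (Fl r z0))
      \<in> borel_measurable borel"
    by (intro measurable_gain_dual b_measurable) (auto simp: case_prod_beta')
  moreover have "indicator (Fl (s - r) -` B \<inter> E)
      = (\<lambda>w. indicator B (Fl (s - r) w) * indicator E w :: ennreal)"
    for r by (auto simp: indicator_def fun_eq_iff)
  ultimately show ?thesis by (simp add: emeasure_one_collision[OF assms])
qed

context
  fixes z0 f
  assumes z0: "z0 \<in> E" and mild: "mild_solution Fl \<gamma> b (return borel z0) f"
begin

lemma sets_solution: "s \<ge> 0 \<Longrightarrow> sets (f s) = sets borel"
  using mild unfolding mild_solution_def by auto

lemma emeasure_solution:
  "s \<ge> 0 \<Longrightarrow> A \<in> sets borel \<Longrightarrow> emeasure (f s) A = emeasure (damped Fl \<kappa> s (return borel z0)) A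
     + (\<integral>\<^sup>+r. emeasure (damped Fl \<kappa> (s - r) (gain \<gamma> b (f r))) A * indicator {0..s} r \<partial>lborel)"
  using mild unfolding mild_solution_def by auto

lemma damped_return_le_solution: "r \<ge> 0 \<Longrightarrow> damped Fl \<kappa> r (return borel z0) \<le> f r"
  by (subst le_measure) (auto simp: sets_solution emeasure_solution)

lemma emeasure_gain_solution_lower:
  assumes "r \<ge> 0" and [measurable]: "B \<in> sets borel"
  shows "ennreal (exp (- r * C)) * scatter_rate B (Fl r z0) \<le> emeasure (gain \<gamma> b (f r)) B"
proof -
  have "ennreal (exp (- r * C)) * scatter_rate B (Fl r z0)
      \<le> (\<integral>\<^sup>+x. scatter_rate B x \<partial>damped Fl \<kappa> r (return borel z0))"
    by (rule nn_integral_damped_return_lower[OF z0 \<open>r \<ge> 0\<close>]) simp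
  also have "\<dots> \<le> (\<integral>\<^sup>+x. scatter_rate B x \<partial>f r)"
    using \<open>r \<ge> 0\<close> by (intro nn_integral_mono_measure) (auto simp: sets_solution damped_return_le_solution)
  also have "\<dots> = emeasure (gain \<gamma> b (f r)) B"
    using \<open>r \<ge> 0\<close> by (intro emeasure_gain[symmetric]) (auto simp: sets_solution)
  finally show ?thesis .
qed

lemma emeasure_solution_lower_one_collision:
  assumes "s \<ge> 0" and B [measurable]: "B \<in> sets borel"
  shows "ennreal (exp (- s * C)) * (\<integral>\<^sup>+r. emeasure (one_collision z0 s r) B * indicator {0..s} r \<partial>lborel)
    \<le> emeasure (f s) B"
proof -
  have "ennreal (exp (- s * C)) * emeasure (one_collision z0 s r) B
      \<le> emeasure (damped Fl \<kappa> (s - r) (gain \<gamma> b (f r))) B" if "r \<in> {0..s}" for r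
  proof -
    have [measurable]: "Fl (s - r) -` B \<inter> E \<in> sets borel" by measurable
    have "ennreal (exp (- s * C)) = ennreal (exp (- (s - r) * C)) * ennreal (exp (- r * C))"
      by (simp add: ennreal_mult[symmetric] exp_add[symmetric] algebra_simps)
    then have "ennreal (exp (- s * C)) * emeasure (one_collision z0 s r) B
        = ennreal (exp (- (s - r) * C))
          * (ennreal (exp (- r * C)) * scatter_rate (Fl (s - r) -` B \<inter> E) (Fl r z0))"
      by (simp only: emeasure_one_collision[OF z0 B] mult.assoc)
    also have "\<dots> \<le> ennreal (exp (- (s - r) * C)) * emeasure (gain \<gamma> b (f r)) (Fl (s - r) -` B \<inter> E)"
      using that by (intro mult_left_mono emeasure_gain_solution_lower) auto
    also have "\<dots> \<le> emeasure (damped Fl \<kappa> (s - r) (gain \<gamma> b (f r))) B"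
      using that by (intro emeasure_damped_lower) (auto simp: sets_solution)
    finally show ?thesis .
  qed
  then have "(\<integral>\<^sup>+r. ennreal (exp (- s * C)) * (emeasure (one_collision z0 s r) B * indicator {0..s} r)
        \<partial>lborel)
      \<le> (\<integral>\<^sup>+r. emeasure (damped Fl \<kappa> (s - r) (gain \<gamma> b (f r))) B * indicator {0..s} r \<partial>lborel)"
    by (intro nn_integral_mono) (simp add: indicator_def mult.assoc[symmetric])
  moreover have "(\<lambda>r. emeasure (one_collision z0 s r) B * indicator {0..s} r) \<in> borel_measurable lborel"
    using borel_measurable_emeasure_one_collision[OF z0] by measurable
  ultimately show ?thesis
    using emeasure_solution[OF \<open>s \<ge> 0\<close> B] by (simp add: nn_integral_cmult add_increasing)
qed

lemma emeasure_gain_solution_lower_one_collision: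
  assumes "s \<ge> 0" and [measurable]: "B \<in> sets borel"
  shows "ennreal (exp (- s * C)) *
      (\<integral>\<^sup>+r. emeasure (gain \<gamma> b (one_collision z0 s r)) B * indicator {0..s} r \<partial>lborel)
    \<le> emeasure (gain \<gamma> b (f s)) B"
proof -
  have "(\<lambda>r. \<integral>\<^sup>+x. scatter_rate B x \<partial>one_collision z0 s r) \<in> borel_measurable borel \<and>
    ennreal (exp (- s * C)) *
      (\<integral>\<^sup>+r. (\<integral>\<^sup>+x. scatter_rate B x \<partial>one_collision z0 s r) * indicator {0..s} r \<partial>lborel)
    \<le> (\<integral>\<^sup>+x. scatter_rate B x \<partial>f s)"
    by (rule nn_integral_mixture_lower_bound[OF sets_solution[OF \<open>s \<ge> 0\<close>] sets_one_collision
        borel_measurable_emeasure_one_collision[OF z0] emeasure_solution_lower_one_collision[OF \<open>s \<ge> 0\<close>]])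
       auto
  moreover have "(\<integral>\<^sup>+x. scatter_rate B x \<partial>one_collision z0 s r)
      = emeasure (gain \<gamma> b (one_collision z0 s r)) B"
    for r by (rule emeasure_gain[symmetric]) auto
  moreover have "(\<integral>\<^sup>+x. scatter_rate B x \<partial>f s) = emeasure (gain \<gamma> b (f s)) B"
    using \<open>s \<ge> 0\<close> by (intro emeasure_gain[symmetric]) (auto simp: sets_solution)
  ultimately show ?thesis by simp
qed

lemma emeasure_damped_gain_solution_lower:
  assumes "0 \<le> s" "s \<le> t" and [measurable]: "A \<in> sets borel"
  shows "ennreal (exp (- t * C)) *
      (\<integral>\<^sup>+r. emeasure (transport Fl (t - s) (restr E (gain \<gamma> b (one_collision z0 s r)))) A
        * indicator {0..s} r \<partial>lborel)
    \<le> emeasure (damped Fl \<kappa> (t - s) (gain \<gamma> b (f s))) A"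
proof -
  have [measurable]: "Fl (t - s) -` A \<inter> E \<in> sets borel" by measurable
  have "ennreal (exp (- t * C)) = ennreal (exp (- (t - s) * C)) * ennreal (exp (- s * C))"
    by (simp add: ennreal_mult[symmetric] exp_add[symmetric] algebra_simps)
  moreover have "emeasure (transport Fl (t - s) (restr E (gain \<gamma> b (one_collision z0 s r)))) A
      = emeasure (gain \<gamma> b (one_collision z0 s r)) (Fl (t - s) -` A \<inter> E)" for r
    by (rule emeasure_transport_restr) auto
  ultimately have "ennreal (exp (- t * C)) *
      (\<integral>\<^sup>+r. emeasure (transport Fl (t - s) (restr E (gain \<gamma> b (one_collision z0 s r)))) A
        * indicator {0..s} r \<partial>lborel)
    = ennreal (exp (- (t - s) * C)) * (ennreal (exp (- s * C)) *
      (\<integral>\<^sup>+r. emeasure (gain \<gamma> b (one_collision z0 s r)) (Fl (t - s) -` A \<inter> E) * indicator {0..s} r \<partial>lborel))"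
    by (simp only: mult.assoc)
  also have "\<dots> \<le> ennreal (exp (- (t - s) * C)) * emeasure (gain \<gamma> b (f s)) (Fl (t - s) -` A \<inter> E)"
    using assms by (intro mult_left_mono emeasure_gain_solution_lower_one_collision) auto
  also have "\<dots> \<le> emeasure (damped Fl \<kappa> (t - s) (gain \<gamma> b (f s))) A"
    using assms by (intro emeasure_damped_lower) (auto simp: sets_solution)
  finally show ?thesis .
qed

lemma emeasure_solution_lower_two_collisions:
  assumes "t \<ge> 0" and [measurable]: "A \<in> sets borel"
  shows "ennreal (exp (- t * C)) *
      (\<integral>\<^sup>+s. (\<integral>\<^sup>+r. emeasure (transport Fl (t - s) (restr E (gain \<gamma> b (one_collision z0 s r)))) A
        * indicator {0..s} r \<partial>lborel) * indicator {0..t} s \<partial>lborel)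
    \<le> emeasure (f t) A"
  (is "ennreal ?c * (\<integral>\<^sup>+s. ?I s * indicator {0..t} s \<partial>lborel) \<le> _")
proof -
  have "ennreal ?c * (\<integral>\<^sup>+s. ?I s * indicator {0..t} s \<partial>lborel)
      \<le> (\<integral>\<^sup>+s. ennreal ?c * (?I s * indicator {0..t} s) \<partial>lborel)"
    by (rule nn_integral_cmult_le)
  also have "\<dots> \<le> (\<integral>\<^sup>+s. emeasure (damped Fl \<kappa> (t - s) (gain \<gamma> b (f s))) A * indicator {0..t} s \<partial>lborel)"
    using emeasure_damped_gain_solution_lower
    by (intro nn_integral_mono) (auto simp: indicator_def mult.assoc[symmetric])
  also have "\<dots> \<le> emeasure (f t) A"
    using emeasure_solution[OF assms] by simp
  finally show ?thesis .
qed

end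

end

section \<open>The characteristic flows\<close>

lemma gronwall_forward:
  fixes q q' :: "real \<Rightarrow> real"
  assumes "0 \<le> t"
    and "\<And>\<tau>. 0 \<le> \<tau> \<Longrightarrow> \<tau> \<le> t \<Longrightarrow> (q has_real_derivative q' \<tau>) (at \<tau>) \<and> q' \<tau> \<le> c * q \<tau>"
  shows "q t \<le> q 0 * exp (c * t)"
proof -
  define g where "g \<tau> = q \<tau> * exp (- c * \<tau>)" for \<tau>
  have "g t \<le> g 0"
  proof (rule DERIV_nonpos_imp_nonincreasing[OF assms(1)])
    fix x assume x: "0 \<le> x" "x \<le> t"
    then have "(g has_real_derivative (q' x - c * q x) * exp (- c * x)) (at x)"
      unfolding g_def using assms(2)
      by (auto intro!: derivative_eq_intros simp: algebra_simps)
    moreover have "(q' x - c * q x) * exp (- c * x) \<le> 0"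
      using assms(2)[OF x] by (simp add: mult_nonpos_nonneg)
    ultimately show "\<exists>y. (g has_real_derivative y) (at x) \<and> y \<le> 0" by blast
  qed
  then have "q t * exp (- c * t) * exp (c * t) \<le> q 0 * exp (c * t)"
    by (simp add: g_def)
  then show ?thesis by (simp add: mult.assoc exp_add[symmetric])
qed

lemma gronwall_two_sided:
  fixes q q' :: "real \<Rightarrow> real"
  assumes deriv: "\<And>\<tau>. (q has_real_derivative q' \<tau>) (at \<tau>)"
    and bound: "\<And>\<tau>. \<bar>\<tau>\<bar> \<le> \<bar>t\<bar> \<Longrightarrow> \<bar>q' \<tau>\<bar> \<le> c * q \<tau>"
  shows "q t \<le> q 0 * exp (c * \<bar>t\<bar>)"
proof (cases "0 \<le> t")
  case True
  have "q t \<le> q 0 * exp (c * t)"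
  proof (rule gronwall_forward[OF True])
    fix \<tau> assume "0 \<le> \<tau>" "\<tau> \<le> t"
    then show "(q has_real_derivative q' \<tau>) (at \<tau>) \<and> q' \<tau> \<le> c * q \<tau>"
      using deriv bound[of \<tau>] by auto
  qed
  then show ?thesis using True by simp
next
  case False
  have "q (- (- t)) \<le> q (- 0) * exp (c * - t)"
  proof (rule gronwall_forward[where q'="\<lambda>\<tau>. - q' (- \<tau>)"])
    fix \<tau> assume "0 \<le> \<tau>" "\<tau> \<le> - t"
    then have "\<bar>- \<tau>\<bar> \<le> \<bar>t\<bar>" by simp
    then show "((\<lambda>\<tau>. q (- \<tau>)) has_real_derivative - q' (- \<tau>)) (at \<tau>) \<and> - q' (- \<tau>) \<le> c * q (- \<tau>)"
      using bound[of "- \<tau>"] DERIV_chain2[OF deriv DERIV_minus[OF DERIV_ident]] by auto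
  qed (use False in simp)
  then show ?thesis using False by simp
qed

lemma measurable_torus_flow:
  "(\<lambda>p. torus_flow (fst p) (snd p) :: 'd::finite state) \<in> borel_measurable (borel \<Otimes>\<^sub>M borel)"
proof -
  have "(\<lambda>p::real \<times> 'd state. (\<chi> i. frac (fst (snd p) $ i + fst p * snd (snd p) $ i)) :: real^'d)
      \<in> borel_measurable (borel \<Otimes>\<^sub>M borel)"
    by (rule borel_measurable_vec_lambda) measurable
  then show ?thesis unfolding torus_flow_def by measurable
qed

lemma sets_torus_box [measurable]: "(torus_box :: (real^'d) set) \<in> sets borel"
proof -
  have "torus_box = (\<Inter>i. {x::real^'d. 0 \<le> x $ i} \<inter> {x. x $ i < 1})" unfolding torus_box_def by auto
  also have "\<dots> \<in> sets borel" by measurable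
  finally show ?thesis .
qed

locale hamiltonian_flow =
  fixes \<Phi> :: "real^'d::finite \<Rightarrow> real" and grad :: "real^'d \<Rightarrow> real^'d"
    and D2 :: "real^'d \<Rightarrow> (real^'d) \<Rightarrow>\<^sub>L (real^'d)"
    and Fl :: "real \<Rightarrow> 'd state \<Rightarrow> 'd state" and m :: real
  assumes has_derivative_potential: "\<And>x. (\<Phi> has_derivative (\<lambda>h. grad x \<bullet> h)) (at x)"
    and has_derivative_grad: "\<And>x. (grad has_derivative blinfun_apply (D2 x)) (at x)"
    and continuous_D2: "continuous_on UNIV D2"
    and potential_ge: "\<And>x. m \<le> \<Phi> x"
    and flow_0: "\<And>z. Fl 0 z = z"
    and flow_ode: "\<And>z t. ((\<lambda>\<tau>. Fl \<tau> z) has_vector_derivative (snd (Fl t z), - grad (fst (Fl t z)))) (at t)"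
begin

definition energy :: "'d state \<Rightarrow> real"
  where "energy z = \<Phi> (fst z) + (norm (snd z))\<^sup>2 / 2"

abbreviation field :: "'d state \<Rightarrow> 'd state"
  where "field y \<equiv> (snd y, - grad (fst y))"

lemma has_derivative_flow: "((\<lambda>\<tau>. Fl \<tau> z) has_derivative (\<lambda>s. s *\<^sub>R field (Fl t z))) (at t)"
  using flow_ode[of z t] by (simp add: has_vector_derivative_def)

lemma has_derivative_position: "((\<lambda>\<tau>. fst (Fl \<tau> z)) has_derivative (\<lambda>s. s *\<^sub>R snd (Fl t z))) (at t)"
  using has_derivative_fst[OF has_derivative_flow[of z t]] by simp

lemma has_derivative_velocity:
  "((\<lambda>\<tau>. snd (Fl \<tau> z)) has_derivative (\<lambda>s. s *\<^sub>R (- grad (fst (Fl t z))))) (at t)"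
  using has_derivative_snd[OF has_derivative_flow[of z t]] by simp

lemma energy_flow: "energy (Fl t z) = energy z"
proof -
  have "((\<lambda>\<tau>. energy (Fl \<tau> z)) has_derivative (\<lambda>_. 0)) (at \<tau>)" for \<tau>
  proof -
    let ?x = "fst (Fl \<tau> z)" and ?v = "snd (Fl \<tau> z)"
    have "((\<lambda>\<tau>. \<Phi> (fst (Fl \<tau> z)) + (snd (Fl \<tau> z) \<bullet> snd (Fl \<tau> z)) / 2) has_derivative
        (\<lambda>s. grad ?x \<bullet> (s *\<^sub>R ?v) + (?v \<bullet> (s *\<^sub>R (- grad ?x)) + (s *\<^sub>R (- grad ?x)) \<bullet> ?v) / 2)) (at \<tau>)"
      by (intro has_derivative_add
            has_derivative_compose[OF has_derivative_position has_derivative_potential]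
            bounded_linear.has_derivative[OF bounded_linear_divide]
            has_derivative_inner[OF has_derivative_velocity has_derivative_velocity])
    then show ?thesis
      by (simp add: energy_def power2_norm_eq_inner inner_commute)
  qed
  then obtain c where "\<And>\<tau>. energy (Fl \<tau> z) = c"
    using has_derivative_zero_constant[of UNIV "\<lambda>\<tau>. energy (Fl \<tau> z)"] by auto
  from this[of t] this[of 0] show ?thesis by (simp add: flow_0)
qed

lemma norm_velocity_flow_le: "norm (snd (Fl t z)) \<le> sqrt (2 * (energy z - m))"
proof -
  have "(norm (snd (Fl t z)))\<^sup>2 / 2 \<le> energy z - m"
    using energy_flow[of t z] potential_ge[of "fst (Fl t z)"] unfolding energy_def by linarith
  then show ?thesis by (intro real_le_rsqrt) simp
qed

lemma norm_position_flow_le: "norm (fst (Fl t z) - fst z) \<le> sqrt (2 * (energy z - m)) * \<bar>t\<bar>"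
proof -
  have "norm (fst (Fl t z) - fst (Fl 0 z)) \<le> sqrt (2 * (energy z - m)) * norm (t - 0)"
  proof (rule differentiable_bound[where f'="\<lambda>\<tau> s. s *\<^sub>R snd (Fl \<tau> z)" and S="closed_segment 0 t"])
    show "((\<lambda>\<tau>. fst (Fl \<tau> z)) has_derivative (\<lambda>s. s *\<^sub>R snd (Fl \<tau> z))) (at \<tau> within closed_segment 0 t)"
      for \<tau>
      using has_derivative_position has_derivative_at_withinI by blast
    show "onorm (\<lambda>s. s *\<^sub>R snd (Fl \<tau> z)) \<le> sqrt (2 * (energy z - m))" for \<tau>
      using onorm_scaleR_left[OF bounded_linear_ident, of "snd (Fl \<tau> z)"] norm_velocity_flow_le[of \<tau> z]
      by (simp add: onorm_id)
  qed auto
  then show ?thesis by (simp add: flow_0)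
qed

lemma field_lipschitz_on_ball:
  "\<exists>L\<ge>0. \<forall>y1 y2. norm y1 \<le> R \<longrightarrow> norm y2 \<le> R \<longrightarrow> norm (field y1 - field y2) \<le> L * norm (y1 - y2)"
proof -
  have "compact (D2 ` cball 0 R)"
    by (rule compact_continuous_image) (rule continuous_on_subset[OF continuous_D2], simp_all)
  then have "bounded (D2 ` cball 0 R)" by (rule compact_imp_bounded)
  then obtain B where "\<forall>y \<in> D2 ` cball 0 R. norm y \<le> B"
    unfolding bounded_iff by blast
  then have B: "\<And>x. x \<in> cball 0 R \<Longrightarrow> norm (D2 x) \<le> B" by blast
  have grad_lipschitz: "norm (grad x1 - grad x2) \<le> max B 0 * norm (x1 - x2)"
    if "x1 \<in> cball 0 R" "x2 \<in> cball 0 R" for x1 x2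
  proof (rule differentiable_bound[where f'="\<lambda>x. blinfun_apply (D2 x)" and S="cball 0 R"])
    show "(grad has_derivative blinfun_apply (D2 x)) (at x within cball 0 R)" for x
      using has_derivative_grad has_derivative_at_withinI by blast
    show "onorm (blinfun_apply (D2 x)) \<le> max B 0" if "x \<in> cball 0 R" for x
      using B[OF that] by (simp add: norm_blinfun.rep_eq)
  qed (use that in auto)
  show ?thesis
  proof (intro exI[of _ "1 + max B 0"] conjI allI impI)
    fix y1 y2 :: "'d state" assume y1: "norm y1 \<le> R" and y2: "norm y2 \<le> R"
    have diff_y: "y1 - y2 = (fst y1 - fst y2, snd y1 - snd y2)" by (simp add: prod_eq_iff)
    have "fst y1 \<in> cball 0 R" "fst y2 \<in> cball 0 R"
      using y1 y2 norm_fst_le[of "fst y1" "snd y1"] norm_fst_le[of "fst y2" "snd y2"] by auto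
    then have "norm (grad (fst y1) - grad (fst y2)) \<le> max B 0 * norm (fst y1 - fst y2)"
      by (rule grad_lipschitz)
    also have "\<dots> \<le> max B 0 * norm (y1 - y2)"
    proof (rule mult_left_mono)
      show "norm (fst y1 - fst y2) \<le> norm (y1 - y2)"
        using norm_fst_le[of "fst y1 - fst y2" "snd y1 - snd y2"] by (simp add: diff_y)
    qed simp
    finally have "norm (grad (fst y1) - grad (fst y2)) \<le> max B 0 * norm (y1 - y2)" .
    moreover have
      "norm (field y1 - field y2) \<le> norm (snd y1 - snd y2) + norm (grad (fst y1) - grad (fst y2))"
      using norm_Pair_le[of "snd y1 - snd y2" "- (grad (fst y1) - grad (fst y2))"]
      by (simp add: norm_minus_commute)
    moreover have "norm (snd y1 - snd y2) \<le> norm (y1 - y2)"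
      using norm_snd_le[of "snd y1 - snd y2" "fst y1 - fst y2"] by (simp add: diff_y)
    ultimately show "norm (field y1 - field y2) \<le> (1 + max B 0) * norm (y1 - y2)"
      by (simp add: algebra_simps)
  qed simp
qed

lemma norm_flow_diff_le:
  assumes "0 \<le> L"
    and lipschitz: "\<forall>y1 y2. norm y1 \<le> R \<longrightarrow> norm y2 \<le> R \<longrightarrow> norm (field y1 - field y2) \<le> L * norm (y1 - y2)"
    and bounded: "\<And>\<tau>. \<bar>\<tau>\<bar> \<le> \<bar>t\<bar> \<Longrightarrow> norm (Fl \<tau> z1) \<le> R \<and> norm (Fl \<tau> z2) \<le> R"
  shows "norm (Fl t z1 - Fl t z2) \<le> norm (z1 - z2) * exp (L * \<bar>t\<bar>)"
proof -
  define \<delta> where "\<delta> \<tau> = Fl \<tau> z1 - Fl \<tau> z2" for \<tau>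
  define \<delta>' where "\<delta>' \<tau> = field (Fl \<tau> z1) - field (Fl \<tau> z2)" for \<tau>
  have d\<delta>: "(\<delta> has_derivative (\<lambda>s. s *\<^sub>R \<delta>' \<tau>)) (at \<tau>)" for \<tau>
    unfolding \<delta>_def[abs_def] \<delta>'_def
    using has_derivative_diff[OF has_derivative_flow[of z1 \<tau>] has_derivative_flow[of z2 \<tau>]]
    by (simp add: scaleR_diff_right)
  have deriv: "((\<lambda>\<tau>. \<delta> \<tau> \<bullet> \<delta> \<tau>) has_real_derivative 2 * (\<delta> \<tau> \<bullet> \<delta>' \<tau>)) (at \<tau>)" for \<tau>
  proof -
    have "(\<lambda>s. \<delta> \<tau> \<bullet> (s *\<^sub>R \<delta>' \<tau>) + (s *\<^sub>R \<delta>' \<tau>) \<bullet> \<delta> \<tau>) = (*) (2 * (\<delta> \<tau> \<bullet> \<delta>' \<tau>))"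
      by (auto simp: fun_eq_iff inner_commute algebra_simps)
    moreover have "((\<lambda>\<tau>. \<delta> \<tau> \<bullet> \<delta> \<tau>)
        has_derivative (\<lambda>s. \<delta> \<tau> \<bullet> (s *\<^sub>R \<delta>' \<tau>) + (s *\<^sub>R \<delta>' \<tau>) \<bullet> \<delta> \<tau>)) (at \<tau>)"
      by (rule has_derivative_inner[OF d\<delta> d\<delta>])
    ultimately show ?thesis
      unfolding has_field_derivative_def by simp
  qed
  have "\<bar>2 * (\<delta> \<tau> \<bullet> \<delta>' \<tau>)\<bar> \<le> 2 * L * (\<delta> \<tau> \<bullet> \<delta> \<tau>)" if "\<bar>\<tau>\<bar> \<le> \<bar>t\<bar>" for \<tau>
  proof -
    have "\<bar>\<delta> \<tau> \<bullet> \<delta>' \<tau>\<bar> \<le> norm (\<delta> \<tau>) * norm (\<delta>' \<tau>)" by (rule Cauchy_Schwarz_ineq2)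
    also have "\<dots> \<le> norm (\<delta> \<tau>) * (L * norm (\<delta> \<tau>))"
    proof (rule mult_left_mono)
      show "norm (\<delta>' \<tau>) \<le> L * norm (\<delta> \<tau>)"
        using lipschitz bounded[OF that] unfolding \<delta>_def \<delta>'_def by blast
    qed simp
    finally show ?thesis by (simp add: power2_norm_eq_inner[symmetric] power2_eq_square mult_ac)
  qed
  from gronwall_two_sided[OF deriv this]
  have "(norm (\<delta> t))\<^sup>2 \<le> (norm (z1 - z2) * exp (L * \<bar>t\<bar>))\<^sup>2"
    by (simp add: \<delta>_def flow_0 power2_norm_eq_inner[symmetric] power_mult_distrib
                  exp_double[symmetric] mult_ac)
  then show ?thesis unfolding \<delta>_def by (rule power2_le_imp_le) simp
qed

lemma continuous_on_energy: "continuous_on UNIV energy"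
proof -
  have "continuous_on UNIV \<Phi>"
    by (intro continuous_at_imp_continuous_on ballI has_derivative_continuous[OF has_derivative_potential])
  then show ?thesis
    unfolding energy_def[abs_def]
    by (intro continuous_intros continuous_on_compose2[OF \<open>continuous_on UNIV \<Phi>\<close>]) auto
qed

lemma flow_bounded_near:
  "\<exists>R. \<forall>z \<in> cball z0 1. \<forall>\<tau>. \<bar>\<tau>\<bar> \<le> T \<longrightarrow> norm (Fl \<tau> z) \<le> R"
proof -
  have "compact (energy ` cball z0 1)"
    by (rule compact_continuous_image) (rule continuous_on_subset[OF continuous_on_energy], simp_all)
  then have "bounded (energy ` cball z0 1)" by (rule compact_imp_bounded)
  then obtain Hmax where "\<forall>y \<in> energy ` cball z0 1. norm y \<le> Hmax"
    unfolding bounded_iff by blast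
  then have Hmax: "energy z \<le> Hmax" if "z \<in> cball z0 1" for z
    using that abs_le_D1[of "energy z" Hmax] by auto
  define V where "V = sqrt (2 * (Hmax - m))"
  have V: "0 \<le> sqrt (2 * (energy z - m)) \<and> sqrt (2 * (energy z - m)) \<le> V" if "z \<in> cball z0 1" for z
    unfolding V_def using Hmax[OF that] potential_ge[of "fst z"]
    by (simp add: energy_def) (use zero_le_power2[of "norm (snd z)"] in linarith)
  have "norm (Fl \<tau> z) \<le> norm z0 + 1 + V * T + V" if z: "z \<in> cball z0 1" and \<tau>: "\<bar>\<tau>\<bar> \<le> T" for z \<tau>
  proof -
    have "norm (fst (Fl \<tau> z) - fst z) \<le> sqrt (2 * (energy z - m)) * \<bar>\<tau>\<bar>"
      by (rule norm_position_flow_le)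
    also have "\<dots> \<le> V * T"
      using V[OF z] \<tau> by (intro mult_mono) (linarith | simp)+
    finally have "norm (fst (Fl \<tau> z) - fst z) \<le> V * T" .
    moreover have "norm (fst z) \<le> norm z0 + 1"
      using z norm_fst_le[of "fst z" "snd z"] norm_triangle_ineq2[of z z0]
      by (auto simp: dist_norm norm_minus_commute)
    moreover have "norm (snd (Fl \<tau> z)) \<le> V"
      using norm_velocity_flow_le[of \<tau> z] V[OF z] by linarith
    ultimately show ?thesis
      using norm_Pair_le[of "fst (Fl \<tau> z)" "snd (Fl \<tau> z)"]
        norm_triangle_ineq[of "fst z" "fst (Fl \<tau> z) - fst z"]
      by simp
  qed
  then show ?thesis by blast
qed

lemma continuous_on_flow: "continuous_on UNIV (\<lambda>p. Fl (fst p) (snd p))"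
proof (intro continuous_at_imp_continuous_on ballI)
  fix p0 :: "real \<times> 'd state"
  obtain t0 z0 where p0: "p0 = (t0, z0)" by (cases p0)
  obtain R where R: "\<And>z \<tau>. z \<in> cball z0 1 \<Longrightarrow> \<bar>\<tau>\<bar> \<le> \<bar>t0\<bar> + 1 \<Longrightarrow> norm (Fl \<tau> z) \<le> R"
    using flow_bounded_near[of z0 "\<bar>t0\<bar> + 1"] by blast
  obtain L where L: "L \<ge> 0"
    and lipschitz: "\<forall>y1 y2. norm y1 \<le> R \<longrightarrow> norm y2 \<le> R \<longrightarrow> norm (field y1 - field y2) \<le> L * norm (y1 - y2)"
    using field_lipschitz_on_ball[of R] by blast
  define K where "K = exp (L * (\<bar>t0\<bar> + 1))"
  have "K > 0" by (simp add: K_def)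
  have cont_t: "continuous (at t0) (\<lambda>\<tau>. Fl \<tau> z0)"
    by (rule has_derivative_continuous[OF has_derivative_flow])
  show "continuous (at p0) (\<lambda>p. Fl (fst p) (snd p))"
    unfolding continuous_at_eps_delta
  proof (intro allI impI)
    fix e :: real assume "e > 0"
    then obtain d1 where "d1 > 0" and d1: "\<And>t. dist t t0 < d1 \<Longrightarrow> dist (Fl t z0) (Fl t0 z0) < e / 2"
      using cont_t unfolding continuous_at_eps_delta by (metis half_gt_zero)
    define d where "d = min (min d1 1) (e / (2 * K))"
    have "d > 0" unfolding d_def using \<open>d1 > 0\<close> \<open>e > 0\<close> \<open>K > 0\<close> by simp
    moreover have "dist (Fl t z) (Fl t0 z0) < e" if "dist (t, z) p0 < d" for t z
    proof -
      have dt: "dist t t0 < d" and dz: "dist z z0 < d"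
        using that dist_fst_le[of "(t, z)" p0] dist_snd_le[of "(t, z)" p0] by (auto simp: p0)
      then have t: "\<bar>t\<bar> \<le> \<bar>t0\<bar> + 1" and z: "z \<in> cball z0 1"
        unfolding d_def dist_real_def by (auto simp: dist_commute)
      have "norm (Fl t z - Fl t z0) \<le> norm (z - z0) * exp (L * \<bar>t\<bar>)"
        using R z t by (intro norm_flow_diff_le[OF L lipschitz]) auto
      also have "\<dots> \<le> d * K"
        using dz t L \<open>d > 0\<close> unfolding K_def by (intro mult_mono) (auto simp: dist_norm mult_left_mono)
      also have "\<dots> \<le> e / 2" unfolding d_def using \<open>K > 0\<close> by (simp add: field_simps min_def)
      finally show ?thesis
        using d1[of t] dt dist_triangle[of "Fl t z" "Fl t0 z0" "Fl t z0"] unfolding d_def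
        by (simp add: dist_norm)
    qed
    ultimately show "\<exists>d>0. \<forall>p. dist p p0 < d \<longrightarrow> dist (Fl (fst p) (snd p)) (Fl (fst p0) (snd p0)) < e"
      by (auto simp: p0)
  qed
qed

lemma measurable_flow: "(\<lambda>p. Fl (fst p) (snd p)) \<in> borel_measurable (borel \<Otimes>\<^sub>M borel)"
  using borel_measurable_continuous_onI[OF continuous_on_flow] by (simp add: borel_prod)

end

lemma kinetic_setting_properties:
  fixes S :: "'d::finite state set"
  assumes "kinetic_setting S Fl H"
  obtains V where "(\<lambda>p. Fl (fst p) (snd p)) \<in> borel_measurable (borel \<Otimes>\<^sub>M borel)"
    and "{z\<in>S. H z \<le> E0} \<in> sets borel"
    and "\<And>z \<tau>. z \<in> {z\<in>S. H z \<le> E0} \<Longrightarrow> Fl \<tau> z \<in> {z\<in>S. H z \<le> E0}"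
    and "\<And>z. z \<in> {z\<in>S. H z \<le> E0} \<Longrightarrow> norm (snd z) \<le> V"
  using assms unfolding kinetic_setting_def
proof (elim disjE conjE exE)
  assume S: "S = torus_box \<times> UNIV" and Fl: "Fl = torus_flow" and H: "H = (\<lambda>z. (norm (snd z))\<^sup>2 / 2)"
  have "{z\<in>S. H z \<le> E0} = fst -` torus_box \<inter> {z. (norm (snd z))\<^sup>2 / 2 \<le> E0}"
    by (auto simp: S H)
  also have "\<dots> \<in> sets borel" by measurable
  finally have "{z\<in>S. H z \<le> E0} \<in> sets borel" .
  moreover have "Fl \<tau> z \<in> {z\<in>S. H z \<le> E0}" if "z \<in> {z\<in>S. H z \<le> E0}" for z \<tau>
    using that by (auto simp: S H Fl torus_flow_def torus_box_def frac_lt_1)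
  moreover have "norm (snd z) \<le> sqrt (2 * E0)" if "z \<in> {z\<in>S. H z \<le> E0}" for z
    using that by (auto simp: H intro: real_le_rsqrt)
  ultimately show thesis
    using that measurable_torus_flow unfolding Fl by blast
next
  fix \<Phi> :: "real^'d \<Rightarrow> real" and grad D2 m
  assume S: "S = UNIV" and H: "H = (\<lambda>z. \<Phi> (fst z) + (norm (snd z))\<^sup>2 / 2)"
    and "\<forall>x. (\<Phi> has_derivative (\<lambda>h. grad x \<bullet> h)) (at x)"
    and "\<forall>x. (grad has_derivative blinfun_apply (D2 x)) (at x)" and "continuous_on UNIV D2"
    and potential_ge: "\<forall>x. m \<le> \<Phi> x" and "\<forall>z. Fl 0 z = z"
    and "\<forall>z t. ((\<lambda>\<tau>. Fl \<tau> z) has_vector_derivative (snd (Fl t z), - grad (fst (Fl t z)))) (at t)"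
  then interpret hamiltonian_flow \<Phi> grad D2 Fl m
    by unfold_locales auto
  have H_energy: "H = energy" by (simp add: H energy_def[abs_def])
  have "{z\<in>S. H z \<le> E0} \<in> sets borel"
    using borel_measurable_continuous_onI[OF continuous_on_energy] by (simp add: S H_energy)
  moreover have "Fl \<tau> z \<in> {z\<in>S. H z \<le> E0}" if "z \<in> {z\<in>S. H z \<le> E0}" for z \<tau>
    using that by (simp add: S H_energy energy_flow)
  moreover have "norm (snd z) \<le> sqrt (2 * (E0 - m))" if "z \<in> {z\<in>S. H z \<le> E0}" for z
    using that potential_ge[rule_format, of "fst z"] by (intro real_le_rsqrt) (simp add: H)
  ultimately show thesis
    using that measurable_flow by blast
qed

theorem mainTheorem12:
  fixes S :: "((real^'d) \<times> (real^'d)) set"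
    and Fl :: "real \<Rightarrow> (real^'d) \<times> (real^'d) \<Rightarrow> (real^'d) \<times> (real^'d)"
    and H :: "(real^'d) \<times> (real^'d) \<Rightarrow> real"
    and \<gamma> E0 :: real and b :: "real \<Rightarrow> real"
  assumes "kinetic_setting S Fl H"
    and "\<gamma> \<ge> 0"
    and "\<forall>s. 0 \<le> b s" and "b \<in> borel_measurable borel"
    and "\<forall>e::real^'d. norm e = 1 \<longrightarrow> integrable sphere_measure (\<lambda>\<sigma>. b (\<sigma> \<bullet> e))"
    and "E0 > 0"
  shows "\<exists>C1>0. \<forall>x0 v0 f. (x0, v0) \<in> S \<and> H (x0, v0) \<le> E0
            \<and> mild_solution Fl \<gamma> b (return borel (x0, v0)) f \<longrightarrow>
          (\<forall>t\<ge>0. \<forall>A\<in>sets borel.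
             ennreal (exp (- t * C1)) *
               (\<integral>\<^sup>+ s. (\<integral>\<^sup>+ r.
                   emeasure (transport Fl (t - s) (restr {z\<in>S. H z \<le> E0} (gain \<gamma> b
                     (transport Fl (s - r) (restr {z\<in>S. H z \<le> E0} (gain \<gamma> b
                       (transport Fl r (restr {z\<in>S. H z \<le> E0} (return borel (x0, v0)))))))))) A
                   * indicator {0..s} r \<partial>lborel) * indicator {0..t} s \<partial>lborel)
             \<le> emeasure (f t) A)"
proof -
  define E where "E = {z\<in>S. H z \<le> E0}"
  obtain V where flow: "(\<lambda>p. Fl (fst p) (snd p)) \<in> borel_measurable (borel \<Otimes>\<^sub>M borel)"
    and E_borel: "E \<in> sets borel" and E_invariant: "\<And>z \<tau>. z \<in> E \<Longrightarrow> Fl \<tau> z \<in> E"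
    and V: "\<And>z. z \<in> E \<Longrightarrow> norm (snd z) \<le> V"
    using kinetic_setting_properties[OF assms(1)] unfolding E_def by blast
  obtain C where "C > 0" and C: "\<And>v::real^'d. norm v \<le> V \<Longrightarrow> coll_freq \<gamma> b v \<le> C"
    using coll_freq_bounded[OF assms(2-5)] by blast
  interpret bounded_collision_region \<gamma> b Fl E C
    using assms(4) flow E_borel E_invariant C V \<open>C > 0\<close> by unfold_locales auto
  show ?thesis
    using emeasure_solution_lower_two_collisions[unfolded one_collision_def] \<open>C > 0\<close> unfolding E_def
    by (intro exI[of _ C] conjI allI impI ballI) auto
qed

end
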